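(* Let $m\in\mathbb{N}_+$, $T=2^m$, $d\ge1$, $G>0$, and run fixed-horizon Haar OLR (described in the context) with horizon $T$ and hyperparameter $\varepsilon=1$. Then for every $u_{1:T}\in(\mathbb{R}^d)^T$, $$\mathrm{Reg}_T(u_{1:T})=\tilde O\Big(\|\bar u\|_2\sqrt T+\sqrt{K\bar E}\Big),$$ where $\bar u=\frac1T\sum_t u_t$, $K=\sum_{t=1}^{T-1}\mathbf 1[u_{t+1}\ne u_t]$, $\bar E=\sum_{t=1}^T\|u_t-\bar u\|_2^2$, and $\tilde O$ hides constant factors (possibly depending on $G$) and factors poly-logarithmic in $T$ and $\max_t\|u_t\|_2$.
   Context: Online convex optimization game: in each round $t$ the player picks $x_t\in\mathbb{R}^d$; an adversarial environment reveals a convex, $G$-Lipschitz (w.r.t. $\|\cdot\|_2$) loss $l_t$, possibly depending on $x_1,\ldots,x_t$; the player observes $g_t\in\partial l_t(x_t)$. Unconstrained dynamic regret: $\mathrm{Reg}_T(u_{1:T})=\sup_{\text{environments}}[\sum_{t=1}^T l_t(x_t)-\sum_{t=1}^T l_t(u_t)]$. Haar dictionary for $T=2^m$: for $j\in[1:m]$, $l\in[1:2^{-j}T]$, $h^{(j,l)}\in\mathbb{R}^T$ has $t$-th entry $1$ for $t\in[2^j(l-1)+1:2^j(l-1)+2^{j-1}]$, $-1$ for $t\in[2^j(l-1)+2^{j-1}+1:2^jl]$, $0$ otherwise; with the all-one vector these $N=T$ vectors are the columns of a $T\times T$ matrix whose $t$-th row is written $(h_{t,1},\ldots,h_{t,N})$.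 FreeGrad (dimension $d$, hyperparameter $\varepsilon'$, Lipschitz constant $\hat G=G$): initialize $s=0$, $v=\hat G^2$; predict $\hat x=-\varepsilon' s\frac{(2v+\hat G\|s\|_2)\hat G^2}{2(v+\hat G\|s\|_2)^2\sqrt v}\exp(\frac{\|s\|_2^2}{2v+2\hat G\|s\|_2})$; observe $\hat g$; update $s\leftarrow s+\hat g$, $v\leftarrow v+\|\hat g\|_2^2$. Fixed-horizon Haar OLR (horizon $T$, hyperparameter $\varepsilon$): $N=T$ copies $\mathcal{A}_n$ of $d$-dimensional FreeGrad with hyperparameter $\varepsilon/N$; in round $t$, for each $n$ with $h_{t,n}\ne0$ query $\mathcal{A}_n$ for $\hat x_{t,n}$ (else arbitrary), set $w_{t,n}=h_{t,n}\hat x_{t,n}$, predict $x_t=\sum_n w_{t,n}$; after $g_t$, for each $n$ with $h_{t,n}\ne0$ send $h_{t,n}g_t$ to $\mathcal{A}_n$. *)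

theory Defs
  imports Complex_Main
begin

(* Vectors of R^d are represented as functions nat => real vanishing at all
   coordinates i >= d; the dimension d is an explicit natural number so that the
   hidden constants of the O~-bound can be required to be independent of d. *)

type_synonym vec = "nat \<Rightarrow> real"

definition Vd :: "nat \<Rightarrow> vec set" where
  "Vd d = {x. \<forall>i\<ge>d. x i = 0}"

definition inner_d :: "nat \<Rightarrow> vec \<Rightarrow> vec \<Rightarrow> real" where
  "inner_d d x y = (\<Sum>i<d. x i * y i)"

definition norm_d :: "nat \<Rightarrow> vec \<Rightarrow> real" where
  "norm_d d x = sqrt (inner_d d x x)"

definition convex_d :: "nat \<Rightarrow> (vec \<Rightarrow> real) \<Rightarrow> bool" where
  "convex_d d f \<longleftrightarrow> (\<forall>x\<in>Vd d. \<forall>y\<in>Vd d. \<forall>a::real. 0 \<le> a \<and> a \<le> 1 \<longrightarrow>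
      f (\<lambda>i. a * x i + (1 - a) * y i) \<le> a * f x + (1 - a) * f y)"

definition lipschitz_d :: "nat \<Rightarrow> real \<Rightarrow> (vec \<Rightarrow> real) \<Rightarrow> bool" where
  "lipschitz_d d G f \<longleftrightarrow> (\<forall>x\<in>Vd d. \<forall>y\<in>Vd d. \<bar>f x - f y\<bar> \<le> G * norm_d d (\<lambda>i. x i - y i))"

definition subgrad_d :: "nat \<Rightarrow> (vec \<Rightarrow> real) \<Rightarrow> vec \<Rightarrow> vec \<Rightarrow> bool" where
  "subgrad_d d f x g \<longleftrightarrow> g \<in> Vd d \<and> (\<forall>y\<in>Vd d. f y \<ge> f x + inner_d d g (\<lambda>i. y i - x i))"

(* Haar dictionary for T = 2^m.  Index (0,0) is the all-one vector; index (j,l)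
   with 1 <= j <= m, 1 <= l <= 2^(m-j) is h^(j,l).  Rounds t are 1-based. *)
definition haar_idx :: "nat \<Rightarrow> (nat \<times> nat) set" where
  "haar_idx m = {(0,0)} \<union> {(j,l). 1 \<le> j \<and> j \<le> m \<and> 1 \<le> l \<and> l \<le> 2^(m-j)}"

fun haar :: "nat \<times> nat \<Rightarrow> nat \<Rightarrow> real" where
  "haar (j,l) t =
     (if j = 0 then 1
      else if 2^j*(l-1) + 1 \<le> t \<and> t \<le> 2^j*(l-1) + 2^(j-1) then 1
      else if 2^j*(l-1) + 2^(j-1) + 1 \<le> t \<and> t \<le> 2^j*l then -1
      else 0)"

definition fg_state :: "nat \<Rightarrow> real \<Rightarrow> vec list \<Rightarrow> vec \<times> real" where
  "fg_state d G gs = foldl (\<lambda>(s,v) g. ((\<lambda>i. s i + g i), v + (norm_d d g)^2)) ((\<lambda>i. 0), G^2) gs"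

definition fg_pred :: "nat \<Rightarrow> real \<Rightarrow> real \<Rightarrow> vec \<times> real \<Rightarrow> vec" where
  "fg_pred d eps' G sv = (case sv of (s,v) \<Rightarrow>
     (\<lambda>i. - eps' * s i * ((2*v + G * norm_d d s) * G^2 / (2 * (v + G * norm_d d s)^2 * sqrt v))
           * exp ((norm_d d s)^2 / (2*v + 2*G * norm_d d s))))"

(* gradients received by copy n after the player's gradients gs = [g_1,...,g_{t-1}] *)
definition received :: "nat \<times> nat \<Rightarrow> vec list \<Rightarrow> vec list" where
  "received n gs = map (\<lambda>(\<tau>,g). (\<lambda>i. haar n \<tau> * g i))
                     (filter (\<lambda>(\<tau>,g). haar n \<tau> \<noteq> 0) (zip [1..<length gs + 1] gs))"

definition haar_pred :: "nat \<Rightarrow> nat \<Rightarrow> real \<Rightarrow> real \<Rightarrow> vec list \<Rightarrow> vec" where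
  "haar_pred m d G eps gs = (let t = length gs + 1 in
     (\<lambda>i. \<Sum>n\<in>{n\<in>haar_idx m. haar n t \<noteq> 0}.
            haar n t * fg_pred d (eps / 2^m) G (fg_state d G (received n gs)) i))"

(* Interaction with an adaptive environment: after seeing x_1..x_t the environment
   fixes loss A [x_1..x_t] and reveals the subgradient S [x_1..x_t] at x_t.
   haar_run ... t is the list of the first t pairs (x_tau, g_tau). *)
fun haar_run :: "nat \<Rightarrow> nat \<Rightarrow> real \<Rightarrow> real \<Rightarrow> (vec list \<Rightarrow> vec) \<Rightarrow> nat \<Rightarrow> (vec \<times> vec) list" where
  "haar_run m d G eps S 0 = []"
| "haar_run m d G eps S (Suc t) =
     (let h = haar_run m d G eps S t;
          x = haar_pred m d G eps (map snd h);
          g = S (map fst h @ [x])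
      in h @ [(x, g)])"

definition valid_env :: "nat \<Rightarrow> real \<Rightarrow> (vec list \<Rightarrow> vec \<Rightarrow> real) \<Rightarrow> (vec list \<Rightarrow> vec) \<Rightarrow> bool" where
  "valid_env d G A S \<longleftrightarrow> (\<forall>xs. xs \<noteq> [] \<and> set xs \<subseteq> Vd d \<longrightarrow>
      convex_d d (A xs) \<and> lipschitz_d d G (A xs) \<and> subgrad_d d (A xs) (last xs) (S xs))"

definition haar_regret :: "nat \<Rightarrow> nat \<Rightarrow> real \<Rightarrow> real \<Rightarrow> (vec list \<Rightarrow> vec \<Rightarrow> real) \<Rightarrow> (vec list \<Rightarrow> vec)
     \<Rightarrow> (nat \<Rightarrow> vec) \<Rightarrow> real" where
  "haar_regret m d G eps A S u = (let xs = map fst (haar_run m d G eps S (2^m)) in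
     (\<Sum>t=1..2^m. A (take t xs) (xs ! (t-1)) - A (take t xs) (u t)))"

definition ubar :: "nat \<Rightarrow> (nat \<Rightarrow> vec) \<Rightarrow> vec" where
  "ubar T u = (\<lambda>i. (\<Sum>t=1..T. u t i) / real T)"

definition switches :: "nat \<Rightarrow> (nat \<Rightarrow> vec) \<Rightarrow> nat" where
  "switches T u = card {t\<in>{1..<T}. u (t+1) \<noteq> u t}"

definition Ebar :: "nat \<Rightarrow> nat \<Rightarrow> (nat \<Rightarrow> vec) \<Rightarrow> real" where
  "Ebar d T u = (\<Sum>t=1..T. (norm_d d (\<lambda>i. u t i - ubar T u i))^2)"

definition umax :: "nat \<Rightarrow> nat \<Rightarrow> (nat \<Rightarrow> vec) \<Rightarrow> real" where
  "umax d T u = Max ((\<lambda>t. norm_d d (u t)) ` {1..T})"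

end

theory Submission
  imports Defs "HOL-Analysis.L2_Norm"
begin

(*
  Copy n of FreeGrad sees the gradients h_{t,n} g_t and competes with the Haar coefficient c_n of
  the comparator sequence, u_t = sum_n h_{t,n} c_n, so the linearised regret of Haar OLR is the sum
  of the linearised regrets of its copies.  FreeGrad's potential
  eps G^2 exp(|s|^2 / (2v + 2G|s|)) / sqrt v decreases at least by the linearised loss in every round
  (a one-dimensional rational inequality), and bounding its convex conjugate shows that a copy
  active in N rounds has regret O(G |c| sqrt N log(...)).  Summing over the copies, the constant
  vector contributes |ubar| sqrt T; on each of the m levels at most K detail coefficients are
  nonzero, because a nonzero coefficient needs a switch of u inside its dyadic block, and by
  Cauchy-Schwarz their weighted sum is at most sqrt (K E).
*)

section \<open>The one-dimensional FreeGrad inequality\<close>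

lemma ln_one_plus_ge_pade:
  fixes z :: real
  assumes "0 \<le> z"
  shows "2*z/(2+z) \<le> ln (1+z)"
proof -
  let ?f = "\<lambda>t::real. ln (1+t) - 2*t/(2+t)"
  have "?f 0 \<le> ?f z"
  proof (rule DERIV_nonneg_imp_nondecreasing[OF assms])
    fix x :: real
    assume x: "0 \<le> x" "x \<le> z"
    have "DERIV ?f x :> 1/(1+x) - (2*(2+x) - 2*x)/(2+x)^2"
      using x by (auto intro!: derivative_eq_intros simp: power2_eq_square)
    moreover have "1/(1+x) - (2*(2+x) - 2*x)/(2+x)^2 = x^2/((1+x)*(2+x)^2)"
      using x by (simp add: divide_simps) algebra
    ultimately show "\<exists>y. DERIV ?f x :> y \<and> 0 \<le> y" using x by auto
  qed
  then show ?thesis by simp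
qed

lemma ln_one_plus_ge_taylor:
  fixes x :: real
  assumes "0 \<le> x"
  shows "x - x^2/2 \<le> ln (1+x)"
proof -
  let ?f = "\<lambda>t::real. ln (1+t) - (t - t^2/2)"
  have "?f 0 \<le> ?f x"
  proof (rule DERIV_nonneg_imp_nondecreasing[OF assms])
    fix y :: real
    assume y: "0 \<le> y" "y \<le> x"
    have "DERIV ?f y :> 1/(1+y) - (1 - y)"
      using y by (auto intro!: derivative_eq_intros simp: power2_eq_square)
    moreover have "1/(1+y) - (1 - y) = y^2/(1+y)"
      using y by (simp add: field_simps power2_eq_square)
    ultimately show "\<exists>z. DERIV ?f y :> z \<and> 0 \<le> z" using y by auto
  qed
  then show ?thesis by simp
qed

lemma ln_one_plus_ge_neg:
  fixes x :: real
  assumes "-1 < x" "x \<le> 0"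
  shows "x - x^2/(2*(1+x)) \<le> ln (1+x)"
proof -
  let ?f = "\<lambda>t::real. ln (1+t) - (t - t^2/(2*(1+t)))"
  have "?f 0 \<le> ?f x"
  proof (rule DERIV_nonpos_imp_nonincreasing[OF assms(2)])
    fix y :: real
    assume y: "x \<le> y" "y \<le> 0"
    have y1: "0 < 1 + y" using y assms by linarith
    have "DERIV ?f y :> 1/(1+y) - (1 - (2*y*(2*(1+y)) - y^2*2)/(2*(1+y))^2)"
      using y1 by (auto intro!: derivative_eq_intros simp: power2_eq_square)
    moreover have "1/(1+y) - (1 - (2*y*(2*(1+y)) - y^2*2)/(2*(1+y))^2) = -(y^2/(2*(1+y)^2))"
      using y1 by (simp add: divide_simps) algebra
    ultimately show "\<exists>z. DERIV ?f y :> z \<and> z \<le> 0" using y1 by auto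
  qed
  then show ?thesis by simp
qed

lemma one_minus_inverse_le_ln:
  fixes y :: real
  assumes "0 < y"
  shows "1 - 1/y \<le> ln y"
  using ln_le_minus_one[of "1/y"] assms by (simp add: ln_div)

(* For G = 1 FreeGrad's potential is exp (phi (norm s) v) / sqrt v, and dphi is the derivative of
   phi in its first argument. *)
definition phi :: "real \<Rightarrow> real \<Rightarrow> real" where "phi r v = r^2/(2*(v+r))"
definition dphi :: "real \<Rightarrow> real \<Rightarrow> real" where "dphi r v = r*(2*v+r)/(2*(v+r)^2)"

lemma dphi_nonneg: "0 \<le> r \<Longrightarrow> 1 \<le> v \<Longrightarrow> 0 \<le> dphi r v"
  by (simp add: dphi_def)

lemma dphi_less_half:
  assumes "0 \<le> r" "1 \<le> v"
  shows "dphi r v < 1/2"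
proof -
  have "r*(2*v+r) < (v+r)^2" using assms by (simp add: power2_eq_square algebra_simps)
  then show ?thesis using assms by (simp add: dphi_def field_simps)
qed

lemma one_plus_mult_dphi_pos:
  assumes "0 \<le> r" "1 \<le> v" "-1 \<le> g"
  shows "0 < 1 + g * dphi r v"
proof -
  have "- dphi r v \<le> g * dphi r v"
    using mult_right_mono[OF assms(3) dphi_nonneg[OF assms(1,2)]] by simp
  then show ?thesis using dphi_less_half[OF assms(1,2)] by linarith
qed

(*
  In the next three lemmas the gap, with its positive denominators cleared, is a polynomial with
  nonnegative coefficients in nonnegative quantities such as r, v - 1, g and 1 - g; P is that
  polynomial.
*)
lemma phi_increment_le_pos:
  fixes r v g :: real
  assumes "0 \<le> r" "1 \<le> v" "0 \<le> g" "g \<le> 1"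
  shows "phi (r+g) (v+g^2) - phi r v - g^2/(2*v+g^2) \<le> g * dphi r v - (g * dphi r v)^2/2"
proof -
  define P where "P x1 x2 x3 x4 =
    8*x3*x4 + 12*x3^2 + 32*x2*x3*x4 + 48*x2*x3^2 + 48*x2^2*x3*x4 + 72*x2^2*x3^2 +
    32*x2^3*x3*x4 + 48*x2^3*x3^2 + 8*x2^4*x3*x4 + 12*x2^4*x3^2 + 24*x1*x4 + 72*x1*x3*x4 +
    96*x1*x3^2*x4 + 104*x1*x3^3 + 96*x1*x2*x4 + 256*x1*x2*x3*x4 + 328*x1*x2*x3^2*x4 +
    352*x1*x2*x3^3 + 144*x1*x2^2*x4 + 336*x1*x2^2*x3*x4 + 408*x1*x2^2*x3^2*x4 +
    432*x1*x2^2*x3^3 + 96*x1*x2^3*x4 + 192*x1*x2^3*x3*x4 + 216*x1*x2^3*x3^2*x4 +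
    224*x1*x2^3*x3^3 + 24*x1*x2^4*x4 + 40*x1*x2^4*x3 + 72*x1^2*x4 + 152*x1^2*x3*x4 +
    188*x1^2*x3^2*x4 + 204*x1^2*x3^3*x4 + 200*x1^2*x3^4 + 216*x1^2*x2*x4 + 408*x1^2*x2*x3*x4 +
    472*x1^2*x2*x3^2*x4 + 504*x1^2*x2*x3^3*x4 + 496*x1^2*x2*x3^4 + 216*x1^2*x2^2*x4 +
    360*x1^2*x2^2*x3*x4 + 380*x1^2*x2^2*x3^2*x4 + 396*x1^2*x2^2*x3^3*x4 + 392*x1^2*x2^2*x3^4 +
    72*x1^2*x2^3*x4 + 104*x1^2*x2^3*x3*x4 + 96*x1^2*x2^3*x3^2 + 88*x1^3*x4 + 144*x1^3*x3*x4 +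
    172*x1^3*x3^2*x4 + 184*x1^3*x3^3*x4 + 180*x1^3*x3^4 + 184*x1^3*x2*x4 + 264*x1^3*x2*x3*x4 +
    288*x1^3*x2*x3^2*x4 + 300*x1^3*x2*x3^3*x4 + 296*x1^3*x2*x3^4 + 104*x1^3*x2^2*x4 +
    128*x1^3*x2^2*x3*x4 + 124*x1^3*x2^2*x3^2 + 8*x1^3*x2^3 + 54*x1^4*x4 + 68*x1^4*x3*x4 +
    81*x1^4*x3^2*x4 + 84*x1^4*x3^3*x4 + 83*x1^4*x3^4 + 68*x1^4*x2*x4 + 74*x1^4*x2*x3*x4 +
    79*x1^4*x2*x3^2 + 14*x1^4*x2^2 + 14*x1^5*x4 + 14*x1^5*x3*x4 + 17*x1^5*x3^2 + 6*x1^5*x2" for x1 x2 x3 x4 :: real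
  have P_nonneg: "0 \<le> P x1 x2 x3 x4" if "0 \<le> x1" "0 \<le> x2" "0 \<le> x3" "0 \<le> x4" for x1 x2 x3 x4
    unfolding P_def using that by (intro add_nonneg_nonneg mult_nonneg_nonneg zero_le_power; simp)
  have pos: "0 < v + r" "0 < v + g^2 + (r + g)" "0 < 2*v + g^2"
    using assms by (simp_all add: add_pos_nonneg)
  then have "g * dphi r v - (g * dphi r v)^2/2 - (phi (r+g) (v+g^2) - phi r v - g^2/(2*v+g^2))
      = g^2 * P r (v-1) g (1-g) / (8*(2*v+g^2)*(v+g^2+(r+g))*(v+r)^4)"
    unfolding phi_def dphi_def P_def by (simp add: divide_simps) algebra
  moreover have "0 \<le> g^2 * P r (v-1) g (1-g) / (8*(2*v+g^2)*(v+g^2+(r+g))*(v+r)^4)"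
    using assms pos by (intro divide_nonneg_pos mult_nonneg_nonneg P_nonneg) auto
  ultimately show ?thesis by linarith
qed

lemma phi_increment_le_neg:
  fixes r v g :: real
  assumes "0 \<le> r + g" "1 \<le> v" "-1 \<le> g" "g \<le> 0"
  shows "phi (r+g) (v+g^2) - phi r v - g^2/(2*v+g^2)
    \<le> g * dphi r v - (g * dphi r v)^2/(2*(1 + g * dphi r v))"
proof -
  define P where "P x1 x2 x3 x4 =
    16*x3*x4 + 44*x3^2*x4 + 60*x3^3*x4 + 74*x3^4*x4 + 68*x3^5*x4 + 53*x3^6*x4 + 47*x3^7*x4 +
    46*x3^8 + 64*x2*x3*x4 + 136*x2*x3^2*x4 + 152*x2*x3^3*x4 + 160*x2*x3^4*x4 +
    120*x2*x3^5*x4 + 97*x2*x3^6*x4 + 95*x2*x3^7 + 96*x2^2*x3*x4 + 144*x2^2*x3^2*x4 +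
    128*x2^2*x3^3*x4 + 110*x2^2*x3^4*x4 + 76*x2^2*x3^5 + 64*x2^3*x3*x4 + 56*x2^3*x3^2*x4 +
    40*x2^3*x3^3*x4 + 28*x2^3*x3^4 + 16*x2^4*x3*x4 + 4*x2^4*x3^2 + 24*x1*x4 + 120*x1*x3*x4 +
    208*x1*x3^2*x4 + 256*x1*x3^3*x4 + 254*x1*x3^4*x4 + 210*x1*x3^5*x4 + 185*x1*x3^6*x4 +
    179*x1*x3^7 + 96*x1*x2*x4 + 368*x1*x2*x3*x4 + 488*x1*x2*x3^2*x4 + 500*x1*x2*x3^3*x4 +
    410*x1*x2*x3^4*x4 + 334*x1*x2*x3^5*x4 + 322*x1*x2*x3^6 + 144*x1*x2^2*x4 +
    384*x1*x2^2*x3*x4 + 360*x1*x2^2*x3^2*x4 + 304*x1*x2^2*x3^3*x4 + 224*x1*x2^2*x3^4*x4 +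
    220*x1*x2^2*x3^5 + 96*x1*x2^3*x4 + 144*x1*x2^3*x3*x4 + 88*x1*x2^3*x3^2*x4 +
    68*x1*x2^3*x3^3 + 24*x1*x2^4*x4 + 8*x1*x2^4*x3 + 72*x1^2*x4 + 232*x1^2*x3*x4 +
    328*x1^2*x3^2*x4 + 338*x1^2*x3^3*x4 + 292*x1^2*x3^4*x4 + 256*x1^2*x3^5*x4 +
    242*x1^2*x3^6 + 216*x1^2*x2*x4 + 504*x1^2*x2*x3*x4 + 536*x1^2*x2*x3^2*x4 +
    444*x1^2*x2*x3^3*x4 + 358*x1^2*x2*x3^4*x4 + 334*x1^2*x2*x3^5 + 216*x1^2*x2^2*x4 +
    312*x1^2*x2^2*x3*x4 + 232*x1^2*x2^2*x3^2*x4 + 162*x1^2*x2^2*x3^3*x4 + 154*x1^2*x2^2*x3^4 +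
    72*x1^2*x2^3*x4 + 40*x1^2*x2^3*x3*x4 + 24*x1^2*x2^3*x3^2 + 88*x1^3*x4 + 204*x1^3*x3*x4 +
    220*x1^3*x3^2*x4 + 192*x1^3*x3^3*x4 + 174*x1^3*x3^4*x4 + 158*x1^3*x3^5 + 184*x1^3*x2*x4 +
    280*x1^3*x2*x3*x4 + 212*x1^3*x2*x3^2*x4 + 172*x1^3*x2*x3^3*x4 + 152*x1^3*x2*x3^4 +
    104*x1^3*x2^2*x4 + 76*x1^3*x2^2*x3*x4 + 40*x1^3*x2^2*x3^2*x4 + 36*x1^3*x2^2*x3^3 +
    8*x1^3*x2^3*x4 + 54*x1^4*x4 + 78*x1^4*x3*x4 + 59*x1^4*x3^2*x4 + 61*x1^4*x3^3*x4 +
    52*x1^4*x3^4 + 68*x1^4*x2*x4 + 48*x1^4*x2*x3*x4 + 37*x1^4*x2*x3^2*x4 + 31*x1^4*x2*x3^3 +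
    14*x1^4*x2^2*x4 + 2*x1^4*x2^2*x3 + 14*x1^5*x4 + 6*x1^5*x3*x4 + 9*x1^5*x3^2*x4 +
    7*x1^5*x3^3 + 6*x1^5*x2*x4 + 2*x1^5*x2*x3" for x1 x2 x3 x4 :: real
  have P_nonneg: "0 \<le> P x1 x2 x3 x4" if "0 \<le> x1" "0 \<le> x2" "0 \<le> x3" "0 \<le> x4" for x1 x2 x3 x4
    unfolding P_def using that by (intro add_nonneg_nonneg mult_nonneg_nonneg zero_le_power; simp)
  have r: "0 \<le> r" using assms by linarith
  have pos: "0 < v + r" "0 < v + g^2 + (r + g)" "0 < 2*v + g^2"
    using assms r by (simp_all add: add_pos_nonneg)
  have M: "0 < 2*(v+r)^2 + g*r*(2*v+r)"
    using one_plus_mult_dphi_pos[OF r \<open>1 \<le> v\<close> \<open>-1 \<le> g\<close>] pos(1)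
    unfolding dphi_def by (simp add: field_simps)
  then have "g * dphi r v - (g * dphi r v)^2/(2*(1 + g * dphi r v))
        - (phi (r+g) (v+g^2) - phi r v - g^2/(2*v+g^2))
      = g^2 * P (r+g) (v-1) (-g) (1+g) / (4*(2*v+g^2)*(v+g^2+(r+g))*(v+r)^2*(2*(v+r)^2+g*r*(2*v+r)))"
    using pos M unfolding phi_def dphi_def P_def by (simp add: divide_simps) algebra
  moreover have
    "0 \<le> g^2 * P (r+g) (v-1) (-g) (1+g) / (4*(2*v+g^2)*(v+g^2+(r+g))*(v+r)^2*(2*(v+r)^2+g*r*(2*v+r)))"
    using assms pos M by (intro divide_nonneg_pos mult_nonneg_nonneg P_nonneg) auto
  ultimately show ?thesis by linarith
qed

lemma phi_increment_le_neg_crossing: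
  fixes r v g :: real
  assumes "0 \<le> r" "r + g \<le> 0" "1 \<le> v" "-1 \<le> g"
  shows "phi (-(r+g)) (v+g^2) - phi r v - g^2/(2*v+g^2)
    \<le> g * dphi r v - (g * dphi r v)^2/(2*(1 + g * dphi r v))"
proof -
  define P where "P x1 x2 x3 x4 =
    8*x3^3*x4^7 + 60*x3^4*x4^6 + 192*x3^5*x4^5 + 340*x3^6*x4^4 + 360*x3^7*x4^3 +
    228*x3^8*x4^2 + 80*x3^9*x4 + 12*x3^10 + 88*x1*x3^3*x4^6 + 552*x1*x3^4*x4^5 +
    1428*x1*x3^5*x4^4 + 1952*x1*x3^6*x4^3 + 1488*x1*x3^7*x4^2 + 600*x1*x3^8*x4 + 100*x1*x3^9 +
    24*x1^2*x3*x4^7 + 168*x1^2*x3^2*x4^6 + 912*x1^2*x3^3*x4^5 + 2872*x1^2*x3^4*x4^4 +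
    4814*x1^2*x3^5*x4^3 + 4318*x1^2*x3^6*x4^2 + 1962*x1^2*x3^7*x4 + 354*x1^2*x3^8 +
    16*x1^3*x4^7 + 328*x1^3*x3*x4^6 + 1664*x1^3*x3^2*x4^5 + 4892*x1^3*x3^3*x4^4 +
    8586*x1^3*x3^4*x4^3 + 8312*x1^3*x3^5*x4^2 + 3982*x1^3*x3^6*x4 + 716*x1^3*x3^7 +
    140*x1^4*x4^6 + 1680*x1^4*x3*x4^5 + 6454*x1^4*x3^2*x4^4 + 12674*x1^4*x3^3*x4^3 +
    13125*x1^4*x3^4*x4^2 + 6371*x1^4*x3^5*x4 + 1015*x1^4*x3^6 + 520*x1^5*x4^5 +
    4436*x1^5*x3*x4^4 + 12632*x1^5*x3^2*x4^3 + 16198*x1^5*x3^3*x4^2 + 8798*x1^5*x3^4*x4 +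
    1295*x1^5*x3^5 + 1074*x1^6*x4^4 + 6652*x1^6*x3*x4^3 + 12978*x1^6*x3^2*x4^2 +
    9280*x1^6*x3^3*x4 + 1598*x1^6*x3^4 + 1330*x1^7*x4^3 + 5618*x1^7*x3*x4^2 +
    6314*x1^7*x3^2*x4 + 1546*x1^7*x3^3 + 967*x1^8*x4^2 + 2363*x1^8*x3*x4 + 959*x1^8*x3^2 +
    362*x1^9*x4 + 327*x1^9*x3 + 46*x1^10 + 32*x2*x3^3*x4^6 + 208*x2*x3^4*x4^5 +
    560*x2*x3^5*x4^4 + 800*x2*x3^6*x4^3 + 640*x2*x3^7*x4^2 + 272*x2*x3^8*x4 + 48*x2*x3^9 +
    288*x2*x1*x3^3*x4^5 + 1520*x2*x1*x3^4*x4^4 + 3164*x2*x1*x3^5*x4^3 + 3252*x2*x1*x3^6*x4^2 +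
    1652*x2*x1*x3^7*x4 + 332*x2*x1*x3^8 + 96*x2*x1^2*x3*x4^6 + 552*x2*x1^2*x3^2*x4^5 +
    2376*x2*x1^2*x3^3*x4^4 + 5876*x2*x1^2*x3^4*x4^3 + 7292*x2*x1^2*x3^5*x4^2 +
    4284*x2*x1^2*x3^6*x4 + 948*x2*x1^2*x3^7 + 64*x2*x1^3*x4^6 + 1072*x2*x1^3*x3*x4^5 +
    4312*x2*x1^3*x3^2*x4^4 + 9528*x2*x1^3*x3^3*x4^3 + 11784*x2*x1^3*x3^4*x4^2 +
    7064*x2*x1^3*x3^5*x4 + 1516*x2*x1^3*x3^6 + 456*x2*x1^4*x4^5 + 4328*x2*x1^4*x3*x4^4 +
    12476*x2*x1^4*x3^2*x4^3 + 16686*x2*x1^4*x3^3*x4^2 + 9893*x2*x1^4*x3^4*x4 +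
    1761*x2*x1^4*x3^5 + 1336*x2*x1^5*x4^4 + 8548*x2*x1^5*x3*x4^3 + 16568*x2*x1^5*x3^2*x4^2 +
    11828*x2*x1^5*x3^3*x4 + 2015*x2*x1^5*x3^4 + 2072*x2*x1^6*x4^3 + 8746*x2*x1^6*x3*x4^2 +
    9550*x2*x1^6*x3^2*x4 + 2142*x2*x1^6*x3^3 + 1760*x2*x1^7*x4^2 + 4184*x2*x1^7*x3*x4 +
    1546*x2*x1^7*x3^2 + 729*x2*x1^8*x4 + 605*x2*x1^8*x3 + 95*x2*x1^9 + 48*x2^2*x3^3*x4^5 +
    264*x2^2*x3^4*x4^4 + 576*x2^2*x3^5*x4^3 + 624*x2^2*x3^6*x4^2 + 336*x2^2*x3^7*x4 +
    72*x2^2*x3^8 + 336*x2^2*x1*x3^3*x4^4 + 1440*x2^2*x1*x3^4*x4^3 + 2268*x2^2*x1*x3^5*x4^2 +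
    1560*x2^2*x1*x3^6*x4 + 396*x2^2*x1*x3^7 + 144*x2^2*x1^2*x3*x4^5 +
    648*x2^2*x1^2*x3^2*x4^4 + 2064*x2^2*x1^2*x3^3*x4^3 + 3716*x2^2*x1^2*x3^4*x4^2 +
    3014*x2^2*x1^2*x3^5*x4 + 862*x2^2*x1^2*x3^6 + 96*x2^2*x1^3*x4^5 + 1248*x2^2*x1^3*x3*x4^4 +
    3712*x2^2*x1^3*x3^2*x4^3 + 5516*x2^2*x1^3*x3^3*x4^2 + 4026*x2^2*x1^3*x3^4*x4 +
    1028*x2^2*x1^3*x3^5 + 528*x2^2*x1^4*x4^4 + 3696*x2^2*x1^4*x3*x4^3 +
    7138*x2^2*x1^4*x3^2*x4^2 + 5204*x2^2*x1^4*x3^3*x4 + 992*x2^2*x1^4*x3^4 +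
    1136*x2^2*x1^5*x4^3 + 4876*x2^2*x1^5*x3*x4^2 + 5156*x2^2*x1^5*x3^2*x4 +
    1076*x2^2*x1^5*x3^3 + 1182*x2^2*x1^6*x4^2 + 2742*x2^2*x1^6*x3*x4 + 926*x2^2*x1^6*x3^2 +
    554*x2^2*x1^7*x4 + 428*x2^2*x1^7*x3 + 76*x2^2*x1^8 + 32*x2^3*x3^3*x4^3 +
    112*x2^3*x3^4*x4^2 + 128*x2^3*x3^5*x4 + 48*x2^3*x3^6 + 128*x2^3*x1*x3^3*x4^2 +
    288*x2^3*x1*x3^4*x4 + 148*x2^3*x1*x3^5 + 96*x2^3*x1^2*x3*x4^3 + 216*x2^3*x1^2*x3^2*x4^2 +
    304*x2^3*x1^2*x3^3*x4 + 148*x2^3*x1^2*x3^4 + 64*x2^3*x1^3*x4^3 + 432*x2^3*x1^3*x3*x4^2 +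
    496*x2^3*x1^3*x3^2*x4 + 96*x2^3*x1^3*x3^3 + 184*x2^3*x1^4*x4^2 + 512*x2^3*x1^4*x3*x4 +
    128*x2^3*x1^4*x3^2 + 160*x2^3*x1^5*x4 + 108*x2^3*x1^5*x3 + 28*x2^3*x1^6 + 8*x2^4*x3^3*x4 +
    12*x2^4*x3^4 + 8*x2^4*x1*x3^3 + 24*x2^4*x1^2*x3*x4 + 16*x2^4*x1^3*x4 + 8*x2^4*x1^3*x3 +
    4*x2^4*x1^4" for x1 x2 x3 x4 :: real
  have P_nonneg: "0 \<le> P x1 x2 x3 x4" if "0 \<le> x1" "0 \<le> x2" "0 \<le> x3" "0 \<le> x4" for x1 x2 x3 x4
    unfolding P_def using that by (intro add_nonneg_nonneg mult_nonneg_nonneg zero_le_power; simp)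
  have pos: "0 < v + r" "0 < v + g^2 - (r + g)" "0 < 2*v + g^2"
    using assms zero_le_power2[of g] by linarith+
  have M: "0 < 2*(v+r)^2 + g*r*(2*v+r)"
    using one_plus_mult_dphi_pos[OF \<open>0 \<le> r\<close> \<open>1 \<le> v\<close> \<open>-1 \<le> g\<close>] pos(1)
    unfolding dphi_def by (simp add: field_simps)
  have "g * dphi r v - (g * dphi r v)^2/(2*(1 + g * dphi r v))
        - (phi (-(r+g)) (v+g^2) - phi r v - g^2/(2*v+g^2))
      = P r (v-1) (-g-r) (1+g) / (4*(v+g^2-(r+g))*(v+r)^2*(2*v+g^2)*(2*(v+r)^2+g*r*(2*v+r)))"
    using pos M unfolding phi_def dphi_def P_def by (simp add: divide_simps) algebra
  moreover have "0 \<le> P r (v-1) (-g-r) (1+g) / (4*(v+g^2-(r+g))*(v+r)^2*(2*v+g^2)*(2*(v+r)^2+g*r*(2*v+r)))"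
    using assms pos M by (intro divide_nonneg_pos P_nonneg) auto
  ultimately show ?thesis by linarith
qed

lemma phi_abs_increment_le_ln:
  fixes r v g :: real
  assumes r: "0 \<le> r" and v: "1 \<le> v" and g: "-1 \<le> g" "g \<le> 1"
  shows "phi \<bar>r+g\<bar> (v+g^2) - phi r v - ln ((v+g^2)/v)/2 \<le> ln (1 + g * dphi r v)"
proof -
  have "g^2/(2*v+g^2) \<le> ln ((v+g^2)/v)/2"
  proof -
    have "2*(g^2/v)/(2 + g^2/v) \<le> ln (1 + g^2/v)"
      using v by (intro ln_one_plus_ge_pade) simp
    moreover have "2*(g^2/v)/(2 + g^2/v) = 2*(g^2/(2*v+g^2))" "1 + g^2/v = (v+g^2)/v"
      using v by (simp_all add: field_simps)
    ultimately have "2*(g^2/(2*v+g^2)) \<le> ln ((v+g^2)/v)" by metis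
    then show ?thesis by linarith
  qed
  moreover have "phi \<bar>r+g\<bar> (v+g^2) - phi r v - g^2/(2*v+g^2) \<le> ln (1 + g * dphi r v)"
  proof (cases "0 \<le> g")
    case True
    then have "phi \<bar>r+g\<bar> (v+g^2) - phi r v - g^2/(2*v+g^2) \<le> g * dphi r v - (g * dphi r v)^2/2"
      using phi_increment_le_pos[OF r v True g(2)] r by simp
    also have "\<dots> \<le> ln (1 + g * dphi r v)"
      using True dphi_nonneg[OF r v] by (intro ln_one_plus_ge_taylor) simp
    finally show ?thesis .
  next
    case False
    have "phi \<bar>r+g\<bar> (v+g^2) - phi r v - g^2/(2*v+g^2)
        \<le> g * dphi r v - (g * dphi r v)^2/(2*(1 + g * dphi r v))"
    proof (cases "0 \<le> r + g")
      case True
      then show ?thesis using phi_increment_le_neg[OF True v g(1)] False by simp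
    next
      case False
      then show ?thesis using phi_increment_le_neg_crossing[OF r _ v g(1)] by simp
    qed
    also have "\<dots> \<le> ln (1 + g * dphi r v)"
      using False dphi_nonneg[OF r v] one_plus_mult_dphi_pos[OF r v g(1)]
      by (intro ln_one_plus_ge_neg) (simp_all add: mult_nonpos_nonneg)
    finally show ?thesis .
  qed
  ultimately show ?thesis by linarith
qed

lemma phi_antimono_right: "0 \<le> y \<Longrightarrow> 0 < w \<Longrightarrow> w \<le> w' \<Longrightarrow> phi y w' \<le> phi y w"
  unfolding phi_def by (intro divide_left_mono mult_pos_pos) auto

lemma phi_diff_le:
  assumes "0 \<le> y0" "y0 \<le> y1" "0 < w"
  shows "phi y1 w - phi y0 w \<le> (y1^2 - y0^2)/(2*w)"
proof -
  have "y1^2/(2*(w+y1)) \<le> y1^2/(2*(w+y0))"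
    using assms by (intro divide_left_mono mult_pos_pos) auto
  then have "phi y1 w - phi y0 w \<le> (y1^2 - y0^2)/(2*(w+y0))"
    unfolding phi_def by (simp add: diff_divide_distrib)
  also have "\<dots> \<le> (y1^2 - y0^2)/(2*w)"
    using assms by (intro divide_left_mono mult_pos_pos) (auto intro: power_mono)
  finally show ?thesis .
qed

(* The part a - g^2 of the squared gradient orthogonal to s only enlarges v, and its effect is
   absorbed by the factor 1 / sqrt v. *)
lemma exp_phi_step_le:
  fixes r v a g :: real
  assumes r: "0 \<le> r" and v: "1 \<le> v" and a: "0 \<le> a" "a \<le> 1" and g: "g^2 \<le> a"
  shows "exp (phi (sqrt (r^2 + 2*r*g + a)) (v+a)) / sqrt (v+a)
    \<le> (1 + g * dphi r v) * exp (phi r v) / sqrt v"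
proof -
  have "g^2 \<le> 1" using a g by linarith
  then have g1: "-1 \<le> g" "g \<le> 1" by (auto simp: abs_square_le_1 abs_le_iff)
  define y where "y = sqrt (r^2 + 2*r*g + a)"
  have sq: "r^2 + 2*r*g + a = (r+g)^2 + (a - g^2)" by algebra
  have y_sq: "y^2 = (r+g)^2 + (a - g^2)" unfolding y_def sq using g by simp
  have y_ge: "\<bar>r+g\<bar> \<le> y"
    unfolding y_def by (rule real_le_rsqrt) (use g sq in \<open>simp add: power2_abs\<close>)
  have v0: "0 < v" and va: "0 < v + a" and vg: "0 < v + g^2" using v a by (simp_all add: add_pos_nonneg)
  have "phi y (v+a) \<le> phi \<bar>r+g\<bar> (v+a) + (a - g^2)/(2*(v+a))"
    using phi_diff_le[OF abs_ge_zero y_ge va] y_sq by simp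
  also have "\<dots> \<le> phi \<bar>r+g\<bar> (v+g^2) + ln ((v+a)/(v+g^2))/2"
  proof -
    have "(a - g^2)/(v+a) = 1 - 1/((v+a)/(v+g^2))" using va vg by (simp add: field_simps)
    moreover have "1 - 1/((v+a)/(v+g^2)) \<le> ln ((v+a)/(v+g^2))"
      using va vg by (intro one_minus_inverse_le_ln) simp
    ultimately have "(a - g^2)/(v+a) \<le> ln ((v+a)/(v+g^2))" by linarith
    moreover have "phi \<bar>r+g\<bar> (v+a) \<le> phi \<bar>r+g\<bar> (v+g^2)"
      using vg g by (intro phi_antimono_right) simp_all
    moreover have "(a - g^2)/(2*(v+a)) = (a - g^2)/(v+a)/2" by simp
    ultimately show ?thesis by argo
  qed
  also have "\<dots> \<le> phi r v + ln (1 + g * dphi r v) + ln ((v+a)/v)/2"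
    using phi_abs_increment_le_ln[OF r v g1] va vg v0 by (simp add: ln_div) argo
  finally have "exp (phi y (v+a)) \<le> exp (phi r v + ln (1 + g * dphi r v) + ln ((v+a)/v)/2)"
    by simp
  also have "\<dots> = exp (phi r v) * (1 + g * dphi r v) * sqrt ((v+a)/v)"
    using one_plus_mult_dphi_pos[OF r v g1(1)] va v0
    by (simp add: exp_add powr_half_sqrt[symmetric] powr_def)
  finally show ?thesis
    unfolding y_def[symmetric] using va v0 by (simp add: divide_simps real_sqrt_divide mult_ac)
qed

section \<open>The FreeGrad potential\<close>

definition fg_potential :: "real \<Rightarrow> real \<Rightarrow> real \<Rightarrow> real" where
  "fg_potential G r v = G^2 * exp (r^2 / (2*v + 2*G*r)) / sqrt v"

(* fg_slope G (norm s) v * s is the gradient in s of fg_potential G (norm s) v; FreeGrad predicts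
   minus eps times it (fg_pred_eq). *)
definition fg_slope :: "real \<Rightarrow> real \<Rightarrow> real \<Rightarrow> real" where
  "fg_slope G r v = (2*v + G*r) * G^2 / (2 * (v + G*r)^2 * sqrt v) * exp (r^2 / (2*v + 2*G*r))"

lemma fg_potential_rescale:
  assumes "0 < G" "0 < v"
  shows "fg_potential G r v = G * (exp (phi (r/G) (v/G^2)) / sqrt (v/G^2))"
  using assms by (simp add: fg_potential_def phi_def real_sqrt_divide field_simps power2_eq_square)

lemma dphi_rescale:
  assumes "0 < G" "0 \<le> r" "0 < v"
  shows "dphi (r/G) (v/G^2) * fg_potential G r v = G * r * fg_slope G r v"
proof -
  have vGr: "v + G*r \<noteq> 0" using assms mult_nonneg_nonneg[of G r] by linarith
  have "2*(v/G^2) + r/G = (2*v + G*r)/G^2" "v/G^2 + r/G = (v + G*r)/G^2"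
    using assms by (simp_all add: field_simps power2_eq_square)
  then have "dphi (r/G) (v/G^2) = (r/G) * ((2*v + G*r)/G^2) / (2*((v + G*r)/G^2)^2)"
    by (simp add: dphi_def)
  also have "\<dots> = G * r * (2*v + G*r) / (2*(v + G*r)^2)"
  proof -
    have "(r/G) * (Z/G^2) / (2*(W/G^2)^2) = G * r * Z / (2*W^2)" if "W \<noteq> 0" for Z W :: real
      using that assms by (simp add: field_simps power2_eq_square)
    then show ?thesis using vGr .
  qed
  finally show ?thesis by (simp add: fg_potential_def fg_slope_def)
qed

lemma fg_potential_step:
  fixes G r v a p :: real
  assumes G: "0 < G" and r: "0 \<le> r" and v: "G^2 \<le> v" and a: "0 \<le> a" "a \<le> G^2"
    and p: "p^2 \<le> r^2 * a"
  shows "fg_potential G (sqrt (r^2 + 2*p + a)) (v + a) \<le> fg_potential G r v + p * fg_slope G r v"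
proof -
  \<comment> \<open>the component of the gradient along s; if r = 0 then p = 0 and division by zero gives g = 0\<close>
  define g where "g = p / (r*G)"
  have p_eq: "r * G * g = p"
  proof (cases "r = 0")
    case True
    then show ?thesis using p by (simp add: g_def)
  qed (use G in \<open>simp add: g_def\<close>)
  have g_sq: "g^2 \<le> a/G^2"
  proof (cases "r = 0")
    case False
    then have "g^2 = p^2 / (r^2 * G^2)" by (simp add: g_def power_divide power_mult_distrib)
    also have "\<dots> \<le> (r^2 * a) / (r^2 * G^2)" using p by (intro divide_right_mono) auto
    finally show ?thesis using False by simp
  qed (use a G in \<open>simp add: g_def\<close>)
  have G2: "0 < G^2" using G by simp
  have v0: "0 < v" and va: "0 < v + a" using v a G2 by linarith+
  have "(r/G)^2 + 2*(r/G)*g + a/G^2 = (r^2 + 2*p + a)/G^2"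
    using G p_eq[symmetric] by (simp add: field_simps power2_eq_square)
  then have sqrt_eq: "sqrt (r^2 + 2*p + a) / G = sqrt ((r/G)^2 + 2*(r/G)*g + a/G^2)"
    using G by (simp add: real_sqrt_divide)
  have step: "exp (phi (sqrt ((r/G)^2 + 2*(r/G)*g + a/G^2)) (v/G^2 + a/G^2)) / sqrt (v/G^2 + a/G^2)
      \<le> (1 + g * dphi (r/G) (v/G^2)) * exp (phi (r/G) (v/G^2)) / sqrt (v/G^2)"
    using G r v a g_sq by (intro exp_phi_step_le) (simp_all add: field_simps)
  have "fg_potential G (sqrt (r^2 + 2*p + a)) (v + a)
      = G * (exp (phi (sqrt ((r/G)^2 + 2*(r/G)*g + a/G^2)) (v/G^2 + a/G^2)) / sqrt (v/G^2 + a/G^2))"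
    unfolding fg_potential_rescale[OF G va] sqrt_eq add_divide_distrib ..
  also have "\<dots> \<le> G * ((1 + g * dphi (r/G) (v/G^2)) * exp (phi (r/G) (v/G^2)) / sqrt (v/G^2))"
    using G by (intro mult_left_mono[OF step]) simp
  also have "\<dots> = fg_potential G r v + g * (dphi (r/G) (v/G^2) * fg_potential G r v)"
    unfolding fg_potential_rescale[OF G v0] by (simp add: algebra_simps add_divide_distrib)
  also have "\<dots> = fg_potential G r v + p * fg_slope G r v"
    unfolding dphi_rescale[OF G r v0] p_eq[symmetric] by (simp add: mult_ac)
  finally show ?thesis .
qed

lemma mul_le_exp_quarter:
  fixes x A :: real
  assumes A: "0 \<le> A" and x: "16 * (1 + ln (1 + A)) \<le> x"
  shows "x * A \<le> exp (x/4)"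
proof -
  have "8*A \<le> exp 2 * (1+A)^2"
  proof -
    have "4*A \<le> (1+A)^2" using zero_le_power2[of "A - 1"] by (simp add: power2_eq_square algebra_simps)
    moreover have "3 \<le> exp (2::real)" using exp_ge_add_one_self[of 2] by simp
    ultimately have "3*(4*A) \<le> exp 2 * (1+A)^2" using A by (intro mult_mono) auto
    then show ?thesis using A by linarith
  qed
  also have "\<dots> = exp 2 * (exp (ln (1+A)) * exp (ln (1+A)))"
    using A by (simp add: power2_eq_square)
  also have "\<dots> = exp (2 + 2 * ln (1+A))"
    by (simp flip: exp_add)
  also have "\<dots> \<le> exp (x/8)" using x by simp
  finally have "8*A \<le> exp (x/8)" .
  moreover have "x/8 \<le> exp (x/8)" using exp_ge_add_one_self[of "x/8"] by linarith
  moreover have "0 \<le> x/8" using x ln_ge_zero[of "1 + A"] A by argo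
  ultimately have "x/8 * (8*A) \<le> exp (x/8) * exp (x/8)" using A by (intro mult_mono) auto
  then show ?thesis by (simp flip: exp_add)
qed

lemma fg_potential_nonneg: "0 \<le> v \<Longrightarrow> 0 \<le> fg_potential G r v"
  by (simp add: fg_potential_def)

lemma fg_potential_conjugate_bound:
  fixes G eps V R C :: real
  assumes G: "0 < G" and eps: "0 < eps" and V: "G^2 \<le> V" and R: "0 \<le> R" and C: "0 \<le> C"
  shows "R*C - eps * fg_potential G R V \<le> 16 * C * sqrt V * (1 + ln (1 + C*V/(eps*G^2)))"
proof -
  define A where "A = C*V/(eps*G^2)"
  have V0: "0 < V" using less_le_trans[OF _ V] G by simp
  have A: "0 \<le> A" unfolding A_def using C V0 eps by simp
  show ?thesis
  proof (cases "R \<le> sqrt V * (16 * (1 + ln (1 + A)))")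
    case True
    then have "R*C \<le> sqrt V * (16 * (1 + ln (1 + A))) * C" using C by (intro mult_right_mono)
    moreover have "0 \<le> eps * fg_potential G R V" using eps V0 fg_potential_nonneg by simp
    ultimately show ?thesis unfolding A_def by (simp add: mult_ac)
  next
    case False
    \<comment> \<open>for large R the potential alone dominates R * C\<close>
    define x where "x = R / sqrt V"
    have R_eq: "R = sqrt V * x" unfolding x_def using V0 by simp
    have x_ge: "16 * (1 + ln (1 + A)) \<le> x" using False V0 unfolding x_def by (simp add: field_simps)
    have "0 \<le> ln (1 + A)" using A by simp
    then have "1 \<le> x" using x_ge by argo
    then have sqrtV_le: "sqrt V \<le> R" unfolding R_eq using V0 by simp
    have R0: "0 < R" using sqrtV_le real_sqrt_gt_zero[OF V0] by linarith
    have "G*R \<le> sqrt V * R" using V G R by (intro mult_right_mono) (simp_all add: real_le_rsqrt)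
    moreover have "sqrt V * sqrt V \<le> sqrt V * R" using sqrtV_le V0 by (intro mult_left_mono) auto
    ultimately have den: "2*V + 2*G*R \<le> 4 * sqrt V * R" using V0 by simp
    have "x/4 = R^2/(4 * sqrt V * R)" unfolding x_def using R0 by (simp add: power2_eq_square)
    also have "\<dots> \<le> R^2/(2*V + 2*G*R)"
      using den V0 G R0 by (intro divide_left_mono) (simp_all add: add_pos_nonneg)
    finally have "exp (x/4) \<le> exp (R^2/(2*V + 2*G*R))" by simp
    then have "x * A \<le> exp (R^2/(2*V + 2*G*R))" using mul_le_exp_quarter[OF A x_ge] by linarith
    moreover have "R*C = eps*G^2/sqrt V * (x * A)"
      unfolding A_def x_def using V0 eps G by (simp add: field_simps)
    moreover have "0 \<le> eps*G^2/sqrt V" using eps V0 by simp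
    ultimately have "R*C \<le> eps*G^2/sqrt V * exp (R^2/(2*V + 2*G*R))"
      by (metis mult_left_mono)
    moreover have "0 \<le> 16 * C * sqrt V * (1 + ln (1 + A))"
      using C V0 A ln_ge_zero[of "1 + A"] by simp
    ultimately show ?thesis unfolding fg_potential_def A_def by (simp add: mult_ac)
  qed
qed

section \<open>Vectors in R^d\<close>

lemma norm_d_eq_L2_set: "norm_d d x = L2_set x {..<d}"
  unfolding norm_d_def inner_d_def L2_set_def by (simp add: power2_eq_square)

lemma norm_d_nonneg [simp]: "0 \<le> norm_d d x"
  by (simp add: norm_d_eq_L2_set)

lemma norm_d_zero [simp]: "norm_d d (\<lambda>i. 0) = 0"
  by (simp add: norm_d_def inner_d_def)

lemma power2_norm_d: "(norm_d d x)^2 = inner_d d x x"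
  unfolding norm_d_def inner_d_def by (simp add: sum_nonneg)

lemma inner_d_commute: "inner_d d x y = inner_d d y x"
  unfolding inner_d_def by (simp add: mult.commute)

lemma inner_d_add_left: "inner_d d (\<lambda>i. x i + y i) z = inner_d d x z + inner_d d y z"
  unfolding inner_d_def by (simp add: distrib_right sum.distrib)

lemma inner_d_add_right: "inner_d d x (\<lambda>i. y i + z i) = inner_d d x y + inner_d d x z"
  unfolding inner_d_def by (simp add: distrib_left sum.distrib)

lemma inner_d_diff_right: "inner_d d x (\<lambda>i. y i - z i) = inner_d d x y - inner_d d x z"
  unfolding inner_d_def by (simp add: right_diff_distrib sum_subtractf)

lemma inner_d_scale_left: "inner_d d (\<lambda>i. c * x i) y = c * inner_d d x y"
  unfolding inner_d_def by (simp add: sum_distrib_left mult.assoc)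

lemma inner_d_scale_right: "inner_d d x (\<lambda>i. c * y i) = c * inner_d d x y"
  unfolding inner_d_def by (simp add: sum_distrib_left mult.left_commute)

lemma inner_d_sum_left: "inner_d d (\<lambda>i. \<Sum>k\<in>K. x k i) y = (\<Sum>k\<in>K. inner_d d (x k) y)"
  unfolding inner_d_def by (simp add: sum_distrib_right sum.swap[of _ K])

lemma inner_d_sum_right: "inner_d d x (\<lambda>i. \<Sum>k\<in>K. y k i) = (\<Sum>k\<in>K. inner_d d x (y k))"
  unfolding inner_d_def by (simp add: sum_distrib_left sum.swap[of _ K])

lemma abs_inner_d_le: "\<bar>inner_d d x y\<bar> \<le> norm_d d x * norm_d d y"
proof -
  have "\<bar>inner_d d x y\<bar> \<le> (\<Sum>i<d. \<bar>x i\<bar> * \<bar>y i\<bar>)"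
    unfolding inner_d_def by (rule order_trans[OF sum_abs]) (simp add: abs_mult)
  also have "\<dots> \<le> L2_set x {..<d} * L2_set y {..<d}" by (rule L2_set_mult_ineq)
  finally show ?thesis by (simp add: norm_d_eq_L2_set)
qed

lemma power2_norm_d_add:
  "(norm_d d (\<lambda>i. x i + y i))^2 = (norm_d d x)^2 + 2 * inner_d d y x + (norm_d d y)^2"
  unfolding power2_norm_d inner_d_add_left inner_d_add_right inner_d_commute[of d x y] by simp

lemma norm_d_scale: "norm_d d (\<lambda>i. c * x i) = \<bar>c\<bar> * norm_d d x"
proof -
  have "inner_d d (\<lambda>i. c * x i) (\<lambda>i. c * x i) = c^2 * inner_d d x x"
    unfolding inner_d_def by (simp add: sum_distrib_left power2_eq_square mult_ac)
  then show ?thesis unfolding norm_d_def by (simp add: real_sqrt_mult)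
qed

lemma norm_d_divide: "norm_d d (\<lambda>i. x i / c) = norm_d d x / \<bar>c\<bar>"
  using norm_d_scale[of d "1/c" x] by simp

lemma norm_d_add_le: "norm_d d (\<lambda>i. x i + y i) \<le> norm_d d x + norm_d d y"
  unfolding norm_d_eq_L2_set by (rule L2_set_triangle_ineq)

lemma norm_d_diff_le: "norm_d d (\<lambda>i. x i - y i) \<le> norm_d d x + norm_d d y"
  using norm_d_add_le[of d x "\<lambda>i. - y i"] norm_d_scale[of d "-1" y] by simp

lemma norm_d_sum_le: "norm_d d (\<lambda>i. \<Sum>k\<in>K. x k i) \<le> (\<Sum>k\<in>K. norm_d d (x k))"
proof (induction K rule: infinite_finite_induct)
  case (insert k K)
  then show ?case using norm_d_add_le[of d "x k" "\<lambda>i. \<Sum>k\<in>K. x k i"] by simp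
qed simp_all

section \<open>FreeGrad on a sequence of gradients\<close>

lemma fg_state_Nil: "fg_state d G [] = ((\<lambda>i. 0), G^2)"
  unfolding fg_state_def by simp

lemma fg_state_snoc:
  "fg_state d G (L @ [g]) = ((\<lambda>i. fst (fg_state d G L) i + g i), snd (fg_state d G L) + (norm_d d g)^2)"
  unfolding fg_state_def by (simp add: case_prod_beta)

lemma fst_fg_state: "fst (fg_state d G L) = (\<lambda>i. \<Sum>k<length L. (L!k) i)"
  by (induction L rule: rev_induct) (simp_all add: fg_state_Nil fg_state_snoc nth_append fun_eq_iff)

lemma snd_fg_state: "snd (fg_state d G L) = G^2 + (\<Sum>k<length L. (norm_d d (L!k))^2)"
  by (induction L rule: rev_induct) (simp_all add: fg_state_Nil fg_state_snoc nth_append)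

lemma snd_fg_state_bounds:
  assumes "\<forall>g\<in>set L. norm_d d g \<le> G"
  shows "G^2 \<le> snd (fg_state d G L)" "snd (fg_state d G L) \<le> G^2 * (1 + real (length L))"
proof -
  show "G^2 \<le> snd (fg_state d G L)" unfolding snd_fg_state by (simp add: sum_nonneg)
  have "(\<Sum>k<length L. (norm_d d (L!k))^2) \<le> (\<Sum>k<length L. G^2)"
    using assms by (intro sum_mono power_mono) auto
  then show "snd (fg_state d G L) \<le> G^2 * (1 + real (length L))"
    unfolding snd_fg_state by (simp add: algebra_simps)
qed

lemma fg_pred_eq: "fg_pred d eps G (s, v) = (\<lambda>i. - (eps * fg_slope G (norm_d d s) v) * s i)"
  unfolding fg_pred_def fg_slope_def by (simp add: fun_eq_iff mult_ac)

lemma fg_step: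
  assumes G: "0 < G" and eps: "0 < eps" and v: "G^2 \<le> v" and g: "norm_d d g \<le> G"
  shows "eps * fg_potential G (norm_d d (\<lambda>i. s i + g i)) (v + (norm_d d g)^2)
    \<le> eps * fg_potential G (norm_d d s) v - inner_d d g (fg_pred d eps G (s, v))"
proof -
  have "\<bar>inner_d d g s\<bar>^2 \<le> (norm_d d g * norm_d d s)^2"
    by (rule power_mono[OF abs_inner_d_le abs_ge_zero])
  then have "(inner_d d g s)^2 \<le> (norm_d d s)^2 * (norm_d d g)^2"
    by (simp add: power_mult_distrib mult.commute)
  moreover have "norm_d d (\<lambda>i. s i + g i) = sqrt ((norm_d d s)^2 + 2 * inner_d d g s + (norm_d d g)^2)"
    by (simp flip: power2_norm_d_add)
  ultimately have "fg_potential G (norm_d d (\<lambda>i. s i + g i)) (v + (norm_d d g)^2)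
      \<le> fg_potential G (norm_d d s) v + inner_d d g s * fg_slope G (norm_d d s) v"
    using G v g by (auto intro!: fg_potential_step power_mono)
  then have "eps * fg_potential G (norm_d d (\<lambda>i. s i + g i)) (v + (norm_d d g)^2)
      \<le> eps * (fg_potential G (norm_d d s) v + inner_d d g s * fg_slope G (norm_d d s) v)"
    using eps by (intro mult_left_mono) auto
  moreover have
    "inner_d d g (fg_pred d eps G (s, v)) = - (eps * fg_slope G (norm_d d s) v) * inner_d d g s"
    by (simp only: fg_pred_eq inner_d_scale_right)
  ultimately show ?thesis by (simp add: algebra_simps)
qed

lemma fg_linearized_le:
  assumes G: "0 < G" and eps: "0 < eps" and L: "\<forall>g\<in>set L. norm_d d g \<le> G"
  shows "(\<Sum>k<length L. inner_d d (L!k) (fg_pred d eps G (fg_state d G (take k L))))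
    \<le> eps*G - eps * fg_potential G (norm_d d (fst (fg_state d G L))) (snd (fg_state d G L))"
  using L
proof (induction L rule: rev_induct)
  case Nil
  then show ?case using G by (simp add: fg_state_Nil fg_potential_def power2_eq_square)
next
  case (snoc g L)
  obtain s v where sv: "fg_state d G L = (s, v)" by (cases "fg_state d G L")
  have "G^2 \<le> v" using snd_fg_state_bounds(1)[of L d G] snoc.prems sv by simp
  then have "eps * fg_potential G (norm_d d (\<lambda>i. s i + g i)) (v + (norm_d d g)^2)
      \<le> eps * fg_potential G (norm_d d s) v - inner_d d g (fg_pred d eps G (s, v))"
    using snoc.prems by (intro fg_step[OF G eps]) auto
  then show ?case using snoc sv by (simp add: fg_state_snoc nth_append)
qed

definition fg_regret :: "nat \<Rightarrow> real \<Rightarrow> real \<Rightarrow> vec list \<Rightarrow> vec \<Rightarrow> real" where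
  "fg_regret d eps G L c =
    (\<Sum>k<length L. inner_d d (L!k) (\<lambda>i. fg_pred d eps G (fg_state d G (take k L)) i - c i))"

lemma fg_regret_le:
  assumes G: "0 < G" and eps: "0 < eps" and L: "\<forall>g\<in>set L. norm_d d g \<le> G" and N: "length L \<le> N"
  shows "fg_regret d eps G L c
    \<le> eps*G + 16 * norm_d d c * G * sqrt (1 + real N) * (1 + ln (1 + norm_d d c * (1 + real N) / eps))"
proof -
  obtain s v where sv: "fg_state d G L = (s, v)" by (cases "fg_state d G L")
  have s: "s = (\<lambda>i. \<Sum>k<length L. (L!k) i)" using fst_fg_state[of d G L] sv by simp
  have v: "G^2 \<le> v" "v \<le> G^2 * (1 + real N)"
    using snd_fg_state_bounds[OF L] sv N G
    by (auto intro: order_trans mult_left_mono simp del: of_nat_add)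
  have G2: "0 < G^2" using G by simp
  have v0: "0 < v" using v(1) G2 by linarith
  have "fg_regret d eps G L c
      = (\<Sum>k<length L. inner_d d (L!k) (fg_pred d eps G (fg_state d G (take k L)))) - inner_d d s c"
    unfolding fg_regret_def s inner_d_sum_left by (simp add: inner_d_diff_right sum_subtractf)
  also have "\<dots> \<le> eps*G + (norm_d d s * norm_d d c - eps * fg_potential G (norm_d d s) v)"
    using fg_linearized_le[OF G eps L] sv abs_inner_d_le[of d s c] by auto
  also have "\<dots> \<le> eps*G + 16 * norm_d d c * sqrt v * (1 + ln (1 + norm_d d c * v / (eps * G^2)))"
    using fg_potential_conjugate_bound[OF G eps v(1)] by simp
  also have "\<dots> \<le> eps*G + 16 * norm_d d c * (G * sqrt (1 + real N))
      * (1 + ln (1 + norm_d d c * (1 + real N) / eps))"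
  proof -
    have "sqrt v \<le> sqrt (G^2 * (1 + real N))" using v(2) by simp
    then have "sqrt v \<le> G * sqrt (1 + real N)" using G by (simp add: real_sqrt_mult)
    moreover have "norm_d d c * v / (eps * G^2) \<le> norm_d d c * (G^2 * (1 + real N)) / (eps * G^2)"
      using v(2) G2 eps by (intro divide_right_mono mult_left_mono) auto
    then have "ln (1 + norm_d d c * v / (eps * G^2)) \<le> ln (1 + norm_d d c * (1 + real N) / eps)"
      using v0 G2 eps by (subst ln_le_cancel_iff) (auto intro!: add_pos_nonneg divide_nonneg_pos)
    moreover have "0 \<le> ln (1 + norm_d d c * v / (eps * G^2))"
      using v0 G2 eps by (intro ln_ge_zero) simp
    ultimately show ?thesis using G v0 by (intro add_left_mono mult_mono) auto
  qed
  finally show ?thesis by (simp add: mult_ac)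
qed

section \<open>Runs of Haar OLR\<close>

lemma length_haar_run [simp]: "length (haar_run m d G eps S t) = t"
  by (induction t) (simp_all add: Let_def)

lemma take_haar_run: "t \<le> T \<Longrightarrow> take t (haar_run m d G eps S T) = haar_run m d G eps S t"
proof (induction T)
  case (Suc T)
  then show ?case by (auto simp: Let_def le_Suc_eq)
qed simp

lemma haar_run_nth:
  assumes "t < T"
  shows "haar_run m d G eps S T ! t =
    (haar_pred m d G eps (map snd (haar_run m d G eps S t)),
     S (map fst (haar_run m d G eps S t) @ [haar_pred m d G eps (map snd (haar_run m d G eps S t))]))"
proof -
  have "haar_run m d G eps S T ! t = take (Suc t) (haar_run m d G eps S T) ! t" using assms by simp
  then show ?thesis using assms by (simp add: take_haar_run Let_def nth_append)
qed

lemma haar_run_pred: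
  "t < T \<Longrightarrow>
    map fst (haar_run m d G eps S T) ! t = haar_pred m d G eps (take t (map snd (haar_run m d G eps S T)))"
  by (simp add: haar_run_nth take_map take_haar_run)

lemma haar_run_grad:
  "t < T \<Longrightarrow>
    map snd (haar_run m d G eps S T) ! t = S (take (Suc t) (map fst (haar_run m d G eps S T)))"
  by (simp add: haar_run_nth take_map take_haar_run Let_def)

lemma received_in_Vd: "set gs \<subseteq> Vd d \<Longrightarrow> set (received n gs) \<subseteq> Vd d"
  unfolding received_def Vd_def by (auto dest: set_zip_rightD)

lemma fg_pred_in_Vd:
  assumes "set L \<subseteq> Vd d"
  shows "fg_pred d eps G (fg_state d G L) \<in> Vd d"
proof -
  obtain s v where sv: "fg_state d G L = (s, v)" by (cases "fg_state d G L")
  have "s i = 0" if "d \<le> i" for i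
    using fst_fg_state[of d G L] sv assms that by (auto simp: Vd_def subset_iff intro!: sum.neutral)
  then show ?thesis unfolding sv fg_pred_eq Vd_def by simp
qed

lemma haar_pred_in_Vd: "set gs \<subseteq> Vd d \<Longrightarrow> haar_pred m d G eps gs \<in> Vd d"
  using fg_pred_in_Vd[OF received_in_Vd] unfolding haar_pred_def Vd_def Let_def by simp

lemma norm_subgrad_le:
  assumes G: "0 < G" and f: "lipschitz_d d G f" and g: "subgrad_d d f x g" and x: "x \<in> Vd d"
  shows "norm_d d g \<le> G"
proof -
  define y where "y = (\<lambda>i. x i + g i)"
  have y: "y \<in> Vd d" and yx: "(\<lambda>i. y i - x i) = g"
    using x g by (simp_all add: y_def Vd_def subgrad_d_def)
  have "f x + (norm_d d g)^2 \<le> f y"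
    using g y unfolding subgrad_d_def yx[symmetric] by (simp add: power2_norm_d)
  moreover have "f y - f x \<le> G * norm_d d g"
    using f x y unfolding lipschitz_d_def yx[symmetric] by (simp add: abs_le_iff)
  ultimately have "norm_d d g * norm_d d g \<le> G * norm_d d g" by (simp add: power2_eq_square)
  moreover have "0 < norm_d d g \<or> norm_d d g = 0" using norm_d_nonneg[of d g] by linarith
  ultimately show ?thesis using G mult_right_le_imp_le by fastforce
qed

lemma haar_run_in_Vd:
  assumes G: "0 < G" and env: "valid_env d G A S"
  shows "\<forall>p\<in>set (haar_run m d G eps S t). fst p \<in> Vd d \<and> snd p \<in> Vd d \<and> norm_d d (snd p) \<le> G"
proof (induction t)
  case (Suc t)
  let ?x = "haar_pred m d G eps (map snd (haar_run m d G eps S t))"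
  let ?xs = "map fst (haar_run m d G eps S t) @ [?x]"
  have x: "?x \<in> Vd d" using Suc by (intro haar_pred_in_Vd) auto
  then have "?xs \<noteq> [] \<and> set ?xs \<subseteq> Vd d" using Suc by auto
  then have "lipschitz_d d G (A ?xs) \<and> subgrad_d d (A ?xs) (last ?xs) (S ?xs)"
    using env unfolding valid_env_def by blast
  then have sg: "lipschitz_d d G (A ?xs)" "subgrad_d d (A ?xs) ?x (S ?xs)" by simp_all
  have "S ?xs \<in> Vd d" using sg(2) unfolding subgrad_d_def by blast
  moreover have "norm_d d (S ?xs) \<le> G" by (rule norm_subgrad_le[OF G sg x])
  moreover have "haar_run m d G eps S (Suc t) = haar_run m d G eps S t @ [(?x, S ?xs)]"
    by (simp add: Let_def)
  ultimately show ?case using Suc x by auto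
qed simp

lemma haar_idx_eq: "haar_idx m = insert (0,0) (SIGMA j:{1..m}. {1..2^(m-j)})"
  unfolding haar_idx_def by auto

lemma finite_haar_idx [simp]: "finite (haar_idx m)"
  by (simp add: haar_idx_eq)

lemma haar_idx_cases [consumes 1, case_names root detail]:
  assumes "n \<in> haar_idx m"
  obtains "n = (0,0)"
  | k b where "n = (Suc k, Suc b)" "Suc k \<le> m" "Suc b \<in> {1..2^(m - Suc k)}"
proof -
  from assms consider "n = (0,0)" | j l where "n = (j,l)" "1 \<le> j" "j \<le> m" "1 \<le> l" "l \<le> 2^(m-j)"
    unfolding haar_idx_def by auto
  then show ?thesis
  proof cases
    case (2 j l)
    then obtain k b where "j = Suc k" "l = Suc b" by (metis Suc_le_D One_nat_def)
    then show ?thesis using 2 that(2) by simp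
  qed (use that(1) in simp)
qed

lemma haar_regret_le_linearized:
  fixes u :: "nat \<Rightarrow> vec"
  assumes G: "0 < G" and env: "valid_env d G A S" and u: "\<forall>t\<in>{1..2^m}. u t \<in> Vd d"
    and xs: "xs = map fst (haar_run m d G eps S (2^m))"
    and gs: "gs = map snd (haar_run m d G eps S (2^m))"
  shows "haar_regret m d G eps A S u
    \<le> (\<Sum>t=1..2^m. inner_d d (gs!(t-1)) (\<lambda>i. (xs!(t-1)) i - u t i))"
  unfolding haar_regret_def Let_def xs[symmetric]
proof (rule sum_mono)
  fix t :: nat
  assume t: "t \<in> {1..2^m}"
  have "set xs \<subseteq> Vd d" using haar_run_in_Vd[OF G env] unfolding xs by auto
  moreover have lxs: "length xs = 2^m" unfolding xs by simp
  ultimately have "take t xs \<noteq> [] \<and> set (take t xs) \<subseteq> Vd d"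
    using t set_take_subset[of t xs] by auto
  then have "subgrad_d d (A (take t xs)) (last (take t xs)) (S (take t xs))"
    using env unfolding valid_env_def by blast
  moreover have "last (take t xs) = xs!(t-1)" using t lxs by (subst last_conv_nth) (auto simp: min_def)
  moreover have "gs!(t-1) = S (take t xs)" unfolding xs gs by (subst haar_run_grad) (use t in auto)
  ultimately have "A (take t xs) (xs!(t-1)) + inner_d d (gs!(t-1)) (\<lambda>i. u t i - (xs!(t-1)) i)
      \<le> A (take t xs) (u t)"
    using u t unfolding subgrad_d_def by auto
  then show "A (take t xs) (xs!(t-1)) - A (take t xs) (u t)
      \<le> inner_d d (gs!(t-1)) (\<lambda>i. (xs!(t-1)) i - u t i)"
    by (simp add: inner_d_diff_right)
qed

lemma received_snoc: "received n (gs @ [g]) = received n gs @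
   (if haar n (Suc (length gs)) \<noteq> 0 then [(\<lambda>i. haar n (Suc (length gs)) * g i)] else [])"
proof -
  have u: "[1..<length (gs @ [g]) + 1] = [1..<length gs + 1] @ [Suc (length gs)]" by simp
  have z: "zip ([1..<length gs + 1] @ [Suc (length gs)]) (gs @ [g])
      = zip [1..<length gs + 1] gs @ [(Suc (length gs), g)]"
    by (subst zip_append) (auto simp: not_less_eq_eq)
  show ?thesis unfolding received_def u z by simp
qed

lemma sum_received_reindex:
  fixes F :: "vec list \<Rightarrow> vec \<Rightarrow> real"
  shows "(\<Sum>t\<in>{t\<in>{1..length gs}. haar n t \<noteq> 0}.
           F (received n (take (t-1) gs)) (\<lambda>i. haar n t * (gs!(t-1)) i))
       = (\<Sum>k<length (received n gs). F (take k (received n gs)) (received n gs ! k))"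
proof (induction gs rule: rev_induct)
  case Nil
  then show ?case by (simp add: received_def)
next
  case (snoc g gs)
  define t0 where "t0 = Suc (length gs)"
  define L where "L = received n gs"
  define old where "old = {t\<in>{1..length gs}. haar n t \<noteq> 0}"
  have fin: "finite old" unfolding old_def by simp
  have t0old: "t0 \<notin> old" unfolding old_def t0_def by simp
  have old_terms: "(\<Sum>t\<in>old. F (received n (take (t-1) (gs@[g]))) (\<lambda>i. haar n t * ((gs@[g])!(t-1)) i))
        = (\<Sum>t\<in>old. F (received n (take (t-1) gs)) (\<lambda>i. haar n t * (gs!(t-1)) i))"
    by (rule sum.cong) (auto simp: old_def nth_append)
  have prefix_terms:
    "(\<Sum>k<length L. F (take k (L @ [y])) ((L @ [y]) ! k)) = (\<Sum>k<length L. F (take k L) (L ! k))" for y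
    by (rule sum.cong) (auto simp: nth_append)
  show ?case
  proof (cases "haar n t0 \<noteq> 0")
    case True
    have support: "{t\<in>{1..length (gs@[g])}. haar n t \<noteq> 0} = insert t0 old"
      using True unfolding old_def t0_def by auto
    have recv: "received n (gs@[g]) = L @ [(\<lambda>i. haar n t0 * g i)]"
      using True unfolding L_def t0_def by (simp add: received_snoc)
    have "(\<Sum>t\<in>{t\<in>{1..length (gs@[g])}. haar n t \<noteq> 0}.
             F (received n (take (t-1) (gs@[g]))) (\<lambda>i. haar n t * ((gs@[g])!(t-1)) i))
        = F (received n (take (t0-1) (gs@[g]))) (\<lambda>i. haar n t0 * ((gs@[g])!(t0-1)) i)
          + (\<Sum>t\<in>old. F (received n (take (t-1) (gs@[g]))) (\<lambda>i. haar n t * ((gs@[g])!(t-1)) i))"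
      unfolding support using fin t0old by simp
    also have "\<dots> = F L (\<lambda>i. haar n t0 * g i) + (\<Sum>k<length L. F (take k L) (L ! k))"
      unfolding old_terms using snoc.IH unfolding old_def L_def t0_def by simp
    also have "\<dots> = (\<Sum>k<length (received n (gs@[g])).
        F (take k (received n (gs@[g]))) (received n (gs@[g]) ! k))"
      unfolding recv using prefix_terms by simp
    finally show ?thesis .
  next
    case False
    have support: "{t\<in>{1..length (gs@[g])}. haar n t \<noteq> 0} = old"
      using False unfolding old_def t0_def by (auto simp: le_Suc_eq)
    have recv: "received n (gs@[g]) = L"
      using False unfolding L_def t0_def by (simp add: received_snoc)
    show ?thesis unfolding support old_terms recv using snoc.IH unfolding old_def L_def by simp
  qed
qed

lemma haar_linearized_regret_eq:
  fixes u c :: "_ \<Rightarrow> vec"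
  assumes gs: "length gs = 2^m"
    and xs: "\<forall>t<2^m. xs!t = haar_pred m d G eps (take t gs)"
    and u: "\<forall>t\<in>{1..2^m}. u t = (\<lambda>i. \<Sum>n\<in>haar_idx m. haar n t * c n i)"
  shows "(\<Sum>t=1..2^m. inner_d d (gs!(t-1)) (\<lambda>i. (xs!(t-1)) i - u t i))
    = (\<Sum>n\<in>haar_idx m. fg_regret d (eps/2^m) G (received n gs) (c n))"
proof -
  define I where "I = haar_idx m"
  define P where "P n t = fg_pred d (eps/2^m) G (fg_state d G (received n (take (t-1) gs)))" for n t
  define F where "F n t = inner_d d (\<lambda>i. haar n t * (gs!(t-1)) i) (\<lambda>i. P n t i - c n i)" for n t
  have "inner_d d (gs!(t-1)) (\<lambda>i. (xs!(t-1)) i - u t i) = (\<Sum>n | n \<in> I \<and> haar n t \<noteq> 0. F n t)"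
    if t: "t \<in> {1..2^m}" for t
  proof -
    have "t - 1 < 2^m" using t by (simp only: atLeastAtMost_iff) linarith
    then have x_eq: "xs!(t-1) = (\<lambda>i. \<Sum>n | n \<in> I \<and> haar n t \<noteq> 0. haar n t * P n t i)"
      using xs[rule_format, of "t-1"] t gs unfolding haar_pred_def P_def I_def Let_def by simp
    have "u t = (\<lambda>i. \<Sum>n\<in>I. haar n t * c n i)" using u t unfolding I_def by blast
    then have "inner_d d (gs!(t-1)) (u t) = (\<Sum>n\<in>I. haar n t * inner_d d (gs!(t-1)) (c n))"
      by (simp add: inner_d_sum_right inner_d_scale_right)
    also have "\<dots> = (\<Sum>n | n \<in> I \<and> haar n t \<noteq> 0. haar n t * inner_d d (gs!(t-1)) (c n))"
      by (rule sum.mono_neutral_right) (auto simp: I_def)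
    finally show ?thesis
      unfolding inner_d_diff_right x_eq inner_d_sum_right inner_d_scale_right F_def
      by (simp add: inner_d_scale_left inner_d_diff_right sum_subtractf right_diff_distrib)
  qed
  then have "(\<Sum>t=1..2^m. inner_d d (gs!(t-1)) (\<lambda>i. (xs!(t-1)) i - u t i))
      = (\<Sum>t=1..2^m. \<Sum>n\<in>I. if haar n t \<noteq> 0 then F n t else 0)"
    by (simp add: sum.inter_filter I_def)
  also have "\<dots> = (\<Sum>n\<in>I. \<Sum>t | t \<in> {1..2^m} \<and> haar n t \<noteq> 0. F n t)"
    by (subst sum.swap) (rule sum.cong[OF refl], rule sum.inter_filter[symmetric], simp)
  also have "\<dots> = (\<Sum>n\<in>I. fg_regret d (eps/2^m) G (received n gs) (c n))"
    unfolding fg_regret_def F_def P_def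
    using sum_received_reindex[where gs=gs,
        where F="\<lambda>L y. inner_d d y (\<lambda>i. fg_pred d (eps/2^m) G (fg_state d G L) i - c _ i)"]
    by (simp add: gs)
  finally show ?thesis unfolding I_def .
qed

lemma length_received: "length (received n gs) = card {t \<in> {1..length gs}. haar n t \<noteq> 0}"
  using sum_received_reindex[where F="\<lambda>_ _. 1" and gs=gs and n=n] by simp

lemma received_norm_le:
  assumes "\<forall>g\<in>set gs. norm_d d g \<le> G"
  shows "\<forall>g\<in>set (received n gs). norm_d d g \<le> G"
proof
  fix x
  assume "x \<in> set (received n gs)"
  then obtain t g where x: "x = (\<lambda>i. haar n t * g i)" and g: "g \<in> set gs"
    unfolding received_def by (auto dest: set_zip_rightD)
  have "\<bar>haar n t\<bar> \<le> 1" by (cases n) auto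
  then have "\<bar>haar n t\<bar> * norm_d d g \<le> norm_d d g" by (simp add: mult_left_le_one_le)
  then show "norm_d d x \<le> G" using assms g unfolding x norm_d_scale by fastforce
qed

section \<open>The Haar expansion of the comparator sequence\<close>

definition dyadic_block :: "nat \<Rightarrow> nat \<Rightarrow> nat set" where
  "dyadic_block k b = {2^k*b + 1 .. 2^k*(b+1)}"

definition block_sum :: "(nat \<Rightarrow> vec) \<Rightarrow> nat \<Rightarrow> nat \<Rightarrow> vec" where
  "block_sum u k b = (\<lambda>i. \<Sum>\<tau>\<in>dyadic_block k b. u \<tau> i)"

definition block_avg :: "(nat \<Rightarrow> vec) \<Rightarrow> nat \<Rightarrow> nat \<Rightarrow> vec" where
  "block_avg u k t = (\<lambda>i. block_sum u k ((t-1) div 2^k) i / 2^k)"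

definition haar_coef :: "nat \<Rightarrow> (nat \<Rightarrow> vec) \<Rightarrow> nat \<times> nat \<Rightarrow> vec" where
  "haar_coef m u n = (if fst n = 0 then ubar (2^m) u
     else (\<lambda>i. (block_sum u (fst n - 1) (2*(snd n - 1)) i
                - block_sum u (fst n - 1) (2*(snd n - 1) + 1) i) / 2^(fst n)))"

lemma finite_dyadic_block [simp]: "finite (dyadic_block k b)"
  unfolding dyadic_block_def by simp

lemma card_dyadic_block [simp]: "card (dyadic_block k b) = 2^k"
  unfolding dyadic_block_def by simp

lemma mem_dyadic_block_iff:
  assumes "1 \<le> t"
  shows "t \<in> dyadic_block k b \<longleftrightarrow> (t-1) div 2^k = b"
proof
  assume "t \<in> dyadic_block k b"
  then show "(t-1) div 2^k = b" by (intro div_nat_eqI) (auto simp: dyadic_block_def)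
next
  assume "(t-1) div 2^k = b"
  then have "t - 1 = 2^k * b + (t-1) mod 2^k" by (metis div_mult_mod_eq mult.commute)
  moreover have "(t-1) mod 2^k < 2^k" by simp
  ultimately show "t \<in> dyadic_block k b"
    using assms unfolding dyadic_block_def atLeastAtMost_iff distrib_left mult_1_right by linarith
qed

lemma dyadic_block_Suc:
  "dyadic_block (Suc k) b = dyadic_block k (2*b) \<union> dyadic_block k (2*b+1)"
  "dyadic_block k (2*b) \<inter> dyadic_block k (2*b+1) = {}"
  unfolding dyadic_block_def by (auto simp: algebra_simps)

lemma sum_dyadic_block_Suc:
  "(\<Sum>\<tau>\<in>dyadic_block (Suc k) b. f \<tau>) = (\<Sum>\<tau>\<in>dyadic_block k (2*b). f \<tau>) + (\<Sum>\<tau>\<in>dyadic_block k (2*b+1). f \<tau>)"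
  unfolding dyadic_block_Suc(1)
  by (rule sum.union_disjoint) (simp_all only: finite_dyadic_block dyadic_block_Suc(2))

lemma block_sum_Suc: "block_sum u (Suc k) b i = block_sum u k (2*b) i + block_sum u k (2*b+1) i"
  unfolding block_sum_def by (rule sum_dyadic_block_Suc)

lemma dyadic_block_subset:
  assumes "j \<le> m" "l \<in> {1..2^(m-j)}"
  shows "dyadic_block j (l-1) \<subseteq> {1..2^m}"
proof -
  have "(2::nat)^j * l \<le> 2^j * 2^(m-j)" using assms by simp
  also have "\<dots> = 2^m" using assms by (simp flip: power_add)
  finally show ?thesis using assms unfolding dyadic_block_def by auto
qed

lemma sum_dyadic_blocks: "(\<Sum>l\<in>{1..L}. \<Sum>\<tau>\<in>dyadic_block j (l-1). f \<tau>) = (\<Sum>\<tau>\<in>{1..2^j*L}. f \<tau>)"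
proof (induction L)
  case (Suc L)
  have "{1..2^j*Suc L} = {1..2^j*L} \<union> dyadic_block j L" "{1..2^j*L} \<inter> dyadic_block j L = {}"
    unfolding dyadic_block_def by (auto simp: algebra_simps)
  then show ?case using Suc by (simp add: sum.union_disjoint)
qed simp

lemma haar_Suc_Suc:
  "haar (Suc k, Suc b) t =
    (if t \<in> dyadic_block k (2*b) then 1 else if t \<in> dyadic_block k (2*b+1) then -1 else 0)"
  unfolding dyadic_block_def by (auto simp: algebra_simps)

lemma haar_Suc_Suc_eq_0: "t \<notin> dyadic_block (Suc k) b \<Longrightarrow> haar (Suc k, Suc b) t = 0"
  unfolding haar_Suc_Suc dyadic_block_Suc by simp

lemma haar_coef_Suc_Suc:
  "haar_coef m u (Suc k, Suc b) = (\<lambda>i. (block_sum u k (2*b) i - block_sum u k (2*b+1) i) / 2^Suc k)"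
  by (simp add: haar_coef_def)

lemma sum_haar_idx:
  "(\<Sum>n\<in>haar_idx m. f n) = f (0,0) + (\<Sum>j\<in>{1..m}. \<Sum>l\<in>{1..2^(m-j)}. f (j,l))"
proof -
  have "(0,0) \<notin> (SIGMA j:{1..m}. {1..2^(m-j)})" by auto
  then have "(\<Sum>n\<in>haar_idx m. f n) = f (0,0) + (\<Sum>n\<in>(SIGMA j:{1..m}. {1..2^(m-j)}). f n)"
    unfolding haar_idx_eq by simp
  then show ?thesis by (subst sum.Sigma) (simp_all add: case_prod_unfold)
qed

lemma haar_coef_0: "haar_coef m u (0, l) = ubar (2^m) u"
  by (simp add: haar_coef_def)

lemma block_avg_0: "1 \<le> t \<Longrightarrow> block_avg u 0 t = u t"
  by (simp add: block_avg_def block_sum_def dyadic_block_def)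

lemma block_avg_top: "1 \<le> t \<Longrightarrow> t \<le> 2^m \<Longrightarrow> block_avg u m t = ubar (2^m) u"
  by (simp add: block_avg_def block_sum_def dyadic_block_def ubar_def)

lemma sum_haar_level_eq_single:
  assumes k: "Suc k \<le> m" and t: "1 \<le> t" "t \<le> 2^m"
  defines "b \<equiv> (t-1) div 2^Suc k"
  shows "(\<Sum>l\<in>{1..2^(m - Suc k)}. haar (Suc k, l) t * f l) = haar (Suc k, Suc b) t * f (Suc b)"
proof -
  have "b < 2^(m - Suc k)"
  proof -
    have "(2::nat)^m = 2^(m - Suc k) * 2^Suc k" using k by (metis le_add_diff_inverse2 power_add)
    then have "t - 1 < 2^(m - Suc k) * 2^Suc k" using t by simp
    then show ?thesis unfolding b_def by (simp add: div_less_iff_less_mult)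
  qed
  then have "(\<Sum>l\<in>{1..2^(m - Suc k)}. haar (Suc k, l) t * f l) = (\<Sum>l\<in>{Suc b}. haar (Suc k, l) t * f l)"
  proof (intro sum.mono_neutral_right ballI)
    fix l
    assume "l \<in> {1..2^(m - Suc k)} - {Suc b}"
    then obtain b' where l: "l = Suc b'" and "b' \<noteq> b" by (cases l) auto
    then have "t \<notin> dyadic_block (Suc k) b'"
      unfolding mem_dyadic_block_iff[OF t(1)] b_def by simp
    then have "haar (Suc k, Suc b') t = 0" by (rule haar_Suc_Suc_eq_0)
    then show "haar (Suc k, l) t * f l = 0" unfolding l by (simp del: haar.simps)
  qed auto
  then show ?thesis by simp
qed

lemma haar_level_sum:
  assumes k: "Suc k \<le> m" and t: "1 \<le> t" "t \<le> 2^m"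
  shows "(\<Sum>l\<in>{1..2^(m - Suc k)}. haar (Suc k, l) t * haar_coef m u (Suc k, l) i)
    = block_avg u k t i - block_avg u (Suc k) t i"
proof -
  define b where "b = (t-1) div 2^Suc k"
  define q where "q = (t-1) div 2^k"
  have t_block: "t \<in> dyadic_block k q"
    using mem_dyadic_block_iff[OF t(1)] unfolding q_def by simp
  have "b = q div 2" unfolding b_def q_def power_Suc2 div_mult2_eq ..
  then have q: "q = 2*b \<or> q = 2*b+1" by presburger
  define B0 where "B0 = block_sum u k (2*b) i"
  define B1 where "B1 = block_sum u k (2*b+1) i"
  have coef: "haar_coef m u (Suc k, Suc b) i = (B0 - B1) / 2^Suc k"
    unfolding haar_coef_Suc_Suc B0_def B1_def ..
  have avg: "block_avg u (Suc k) t i = (B0 + B1) / 2^Suc k"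
    unfolding block_avg_def b_def[symmetric] block_sum_Suc B0_def B1_def ..
  have "(\<Sum>l\<in>{1..2^(m - Suc k)}. haar (Suc k, l) t * haar_coef m u (Suc k, l) i)
      = haar (Suc k, Suc b) t * haar_coef m u (Suc k, Suc b) i"
    unfolding b_def by (rule sum_haar_level_eq_single[OF k t])
  also have "\<dots> = block_avg u k t i - block_avg u (Suc k) t i"
    using q
  proof
    assume "q = 2*b"
    then have "haar (Suc k, Suc b) t = 1" "block_avg u k t i = B0 / 2^k"
      using t_block unfolding haar_Suc_Suc block_avg_def q_def[symmetric] B0_def by simp_all
    then show ?thesis unfolding coef avg by (simp add: field_simps)
  next
    assume "q = 2*b+1"
    then have "haar (Suc k, Suc b) t = -1" "block_avg u k t i = B1 / 2^k"
      using t_block dyadic_block_Suc(2)[of k b]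
      unfolding haar_Suc_Suc block_avg_def q_def[symmetric] B1_def by auto
    then show ?thesis unfolding coef avg by (simp add: field_simps)
  qed
  finally show ?thesis .
qed

lemma haar_expansion:
  assumes t: "1 \<le> t" "t \<le> 2^m"
  shows "u t = (\<lambda>i. \<Sum>n\<in>haar_idx m. haar n t * haar_coef m u n i)"
proof
  fix i
  have "(\<Sum>n\<in>haar_idx m. haar n t * haar_coef m u n i)
      = ubar (2^m) u i + (\<Sum>j\<in>{1..m}. \<Sum>l\<in>{1..2^(m-j)}. haar (j,l) t * haar_coef m u (j,l) i)"
    unfolding sum_haar_idx by (simp add: haar_coef_0)
  also have "(\<Sum>j\<in>{1..m}. \<Sum>l\<in>{1..2^(m-j)}. haar (j,l) t * haar_coef m u (j,l) i)
      = (\<Sum>j\<in>{1..m}. block_avg u (j-1) t i - block_avg u j t i)"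
  proof (rule sum.cong[OF refl])
    fix j
    assume "j \<in> {1..m}"
    then obtain k where "j = Suc k" "Suc k \<le> m" by (cases j) auto
    then show "(\<Sum>l\<in>{1..2^(m-j)}. haar (j,l) t * haar_coef m u (j,l) i)
        = block_avg u (j-1) t i - block_avg u j t i"
      using haar_level_sum[OF _ t] by simp
  qed
  also have "\<dots> = u t i - ubar (2^m) u i"
    using sum_telescope''[of 0 m "\<lambda>j. - block_avg u j t i"] block_avg_0[OF t(1)] block_avg_top[OF t]
    by simp
  finally show "u t i = (\<Sum>n\<in>haar_idx m. haar n t * haar_coef m u n i)" by simp
qed

section \<open>Size, sparsity and energy of the Haar coefficients\<close>

lemma norm_le_umax: "\<tau> \<in> {1..T} \<Longrightarrow> norm_d d (u \<tau>) \<le> umax d T u"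
  unfolding umax_def by (intro Max_ge) auto

lemma umax_nonneg: "1 \<le> T \<Longrightarrow> 0 \<le> umax d T u"
  by (rule order_trans[OF norm_d_nonneg norm_le_umax[of 1]]) simp

lemma norm_ubar_le_umax: "norm_d d (ubar (2^m) u) \<le> umax d (2^m) u"
proof -
  have "norm_d d (ubar (2^m) u) = norm_d d (\<lambda>i. \<Sum>t=1..2^m. u t i) / 2^m"
    unfolding ubar_def by (simp add: norm_d_divide)
  also have "\<dots> \<le> (\<Sum>t=1..2^m. norm_d d (u t)) / 2^m"
    by (intro divide_right_mono norm_d_sum_le) simp
  also have "\<dots> \<le> (\<Sum>t=1..(2::nat)^m. umax d (2^m) u) / 2^m"
    by (intro divide_right_mono sum_mono norm_le_umax) simp_all
  finally show ?thesis by simp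
qed

lemma norm_haar_coef_le:
  "norm_d d (haar_coef m u (Suc k, Suc b)) \<le> (\<Sum>\<tau>\<in>dyadic_block (Suc k) b. norm_d d (u \<tau>)) / 2^Suc k"
proof -
  have "norm_d d (haar_coef m u (Suc k, Suc b))
      = norm_d d (\<lambda>i. block_sum u k (2*b) i - block_sum u k (2*b+1) i) / 2^Suc k"
    unfolding haar_coef_Suc_Suc norm_d_divide by simp
  also have "\<dots> \<le> (norm_d d (block_sum u k (2*b)) + norm_d d (block_sum u k (2*b+1))) / 2^Suc k"
    by (intro divide_right_mono norm_d_diff_le) simp
  also have "\<dots> \<le> ((\<Sum>\<tau>\<in>dyadic_block k (2*b). norm_d d (u \<tau>))
      + (\<Sum>\<tau>\<in>dyadic_block k (2*b+1). norm_d d (u \<tau>))) / 2^Suc k"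
    unfolding block_sum_def by (intro divide_right_mono add_mono norm_d_sum_le) simp
  also have "\<dots> = (\<Sum>\<tau>\<in>dyadic_block (Suc k) b. norm_d d (u \<tau>)) / 2^Suc k"
    by (simp only: sum_dyadic_block_Suc)
  finally show ?thesis .
qed

lemma haar_coef_diff_const: "haar_coef m (\<lambda>\<tau> i. u \<tau> i - c i) (Suc k, l) = haar_coef m u (Suc k, l)"
  by (simp add: haar_coef_def block_sum_def sum_subtractf)

lemma norm_haar_coef_le_umax:
  assumes "n \<in> haar_idx m"
  shows "norm_d d (haar_coef m u n) \<le> umax d (2^m) u"
  using assms
proof (cases rule: haar_idx_cases)
  case root
  then show ?thesis by (simp add: haar_coef_0 norm_ubar_le_umax)
next
  case (detail k b)
  note n = detail(1) and k = detail(2) and b = detail(3)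
  have "norm_d d (haar_coef m u n) \<le> (\<Sum>\<tau>\<in>dyadic_block (Suc k) b. norm_d d (u \<tau>)) / 2^Suc k"
    unfolding n by (rule norm_haar_coef_le)
  also have "\<dots> \<le> (\<Sum>\<tau>\<in>dyadic_block (Suc k) b. umax d (2^m) u) / 2^Suc k"
    using dyadic_block_subset[OF k b] by (intro divide_right_mono sum_mono norm_le_umax) auto
  finally show ?thesis by simp
qed

lemma sum_le_sqrt_card_mult_L2:
  fixes f :: "'a \<Rightarrow> real"
  shows "(\<Sum>x\<in>A. f x) \<le> sqrt (card A) * sqrt (\<Sum>x\<in>A. (f x)^2)"
proof -
  have "(\<Sum>x\<in>A. f x) \<le> (\<Sum>x\<in>A. \<bar>1\<bar> * \<bar>f x\<bar>)" by (intro sum_mono) simp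
  also have "\<dots> \<le> L2_set (\<lambda>_. 1) A * L2_set f A" by (rule L2_set_mult_ineq)
  finally show ?thesis by (simp add: L2_set_constant L2_set_def)
qed

lemma norm_haar_coef_sqrt_le:
  "norm_d d (haar_coef m u (Suc k, Suc b)) * sqrt (2^Suc k)
    \<le> sqrt (\<Sum>\<tau>\<in>dyadic_block (Suc k) b. (norm_d d (\<lambda>i. u \<tau> i - ubar (2^m) u i))^2)"
proof -
  define w where "w \<tau> = (\<lambda>i. u \<tau> i - ubar (2^m) u i)" for \<tau>
  define N :: real where "N = 2^Suc k"
  have N: "0 < N" "sqrt N * sqrt N = N" unfolding N_def by simp_all
  have "norm_d d (haar_coef m u (Suc k, Suc b)) \<le> (\<Sum>\<tau>\<in>dyadic_block (Suc k) b. norm_d d (w \<tau>)) / N"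
    using norm_haar_coef_le[of d m w k b] haar_coef_diff_const[of m u "ubar (2^m) u" k "Suc b"]
    unfolding w_def N_def by simp
  also have "\<dots> \<le> sqrt N * sqrt (\<Sum>\<tau>\<in>dyadic_block (Suc k) b. (norm_d d (w \<tau>))^2) / N"
    using sum_le_sqrt_card_mult_L2[of "\<lambda>\<tau>. norm_d d (w \<tau>)" "dyadic_block (Suc k) b"] N(1)
    unfolding N_def by (intro divide_right_mono) simp_all
  finally have "norm_d d (haar_coef m u (Suc k, Suc b)) * sqrt N
      \<le> sqrt N * sqrt (\<Sum>\<tau>\<in>dyadic_block (Suc k) b. (norm_d d (w \<tau>))^2) / N * sqrt N"
    by (rule mult_right_mono) (simp add: N_def)
  also have "\<dots> = (sqrt N * sqrt N) * sqrt (\<Sum>\<tau>\<in>dyadic_block (Suc k) b. (norm_d d (w \<tau>))^2) / N"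
    by (simp add: mult_ac)
  finally show ?thesis using N unfolding w_def N_def[symmetric] by simp
qed

lemma eq_if_no_switch:
  assumes "\<forall>t. a \<le> t \<and> t < c \<longrightarrow> u (Suc t) = u t" and "a \<le> \<tau>" "\<tau> \<le> c"
  shows "u \<tau> = u a"
  using assms(2,3) by (induction \<tau> rule: dec_induct) (use assms(1) in auto)

lemma haar_coef_eq_0_if_no_switch:
  assumes "\<forall>t. 2^Suc k*b + 1 \<le> t \<and> t < 2^Suc k*(b+1) \<longrightarrow> u (Suc t) = u t"
  shows "haar_coef m u (Suc k, Suc b) = (\<lambda>i. 0)"
proof -
  define a where "a = 2^Suc k*b + 1"
  have "u \<tau> = u a" if "\<tau> \<in> dyadic_block (Suc k) b" for \<tau>
    using that eq_if_no_switch[OF assms, of \<tau>] unfolding a_def dyadic_block_def by auto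
  then have "block_sum u k (2*b) = (\<lambda>i. 2^k * u a i)" "block_sum u k (2*b+1) = (\<lambda>i. 2^k * u a i)"
    unfolding block_sum_def using dyadic_block_Suc(1)[of k b] by auto
  then show ?thesis by (simp add: haar_coef_Suc_Suc)
qed

lemma card_nonzero_haar_coef_le_switches:
  assumes k: "Suc k \<le> m"
  shows "card {l \<in> {1..2^(m - Suc k)}. haar_coef m u (Suc k, l) \<noteq> (\<lambda>i. 0)} \<le> switches (2^m) u"
proof -
  define Z where "Z = {l \<in> {1..2^(m - Suc k)}. haar_coef m u (Suc k, l) \<noteq> (\<lambda>i. 0)}"
  define P where "P l t \<longleftrightarrow>
    t \<in> dyadic_block (Suc k) (l-1) \<and> Suc t \<in> dyadic_block (Suc k) (l-1) \<and> u (Suc t) \<noteq> u t"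
    for l t
  have "\<exists>t. P l t" if l: "l \<in> Z" for l
  proof (rule ccontr)
    obtain b where b: "l = Suc b" using l unfolding Z_def by (cases l) auto
    assume "\<nexists>t. P l t"
    then have "\<forall>t. 2^Suc k*b + 1 \<le> t \<and> t < 2^Suc k*(b+1) \<longrightarrow> u (Suc t) = u t"
      unfolding P_def b dyadic_block_def by auto
    then show False using l haar_coef_eq_0_if_no_switch unfolding Z_def b by blast
  qed
  then obtain f where f: "\<And>l. l \<in> Z \<Longrightarrow> P l (f l)" by metis
  have "inj_on f Z"
  proof (rule inj_onI)
    fix l l'
    assume l: "l \<in> Z" "l' \<in> Z" and eq: "f l = f l'"
    have one: "1 \<le> f l" using f[OF l(1)] unfolding P_def dyadic_block_def by auto
    have "(f l - 1) div 2^Suc k = l - 1"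
      using f[OF l(1)] unfolding P_def mem_dyadic_block_iff[OF one] by blast
    moreover have "(f l - 1) div 2^Suc k = l' - 1"
      using f[OF l(2)] unfolding eq[symmetric] P_def mem_dyadic_block_iff[OF one] by blast
    ultimately show "l = l'" using l unfolding Z_def by auto
  qed
  moreover have "f ` Z \<subseteq> {t \<in> {1..<2^m}. u (t+1) \<noteq> u t}"
  proof
    fix t
    assume "t \<in> f ` Z"
    then obtain l where "l \<in> Z" "P l t" using f by blast
    moreover have "dyadic_block (Suc k) (l-1) \<subseteq> {1..2^m}"
      using \<open>l \<in> Z\<close> k unfolding Z_def by (intro dyadic_block_subset) auto
    ultimately show "t \<in> {t \<in> {1..<2^m}. u (t+1) \<noteq> u t}" unfolding P_def by auto
  qed
  ultimately show ?thesis
    unfolding switches_def Z_def[symmetric] by (intro card_inj_on_le) auto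
qed

lemma haar_level_energy_le:
  assumes k: "Suc k \<le> m"
  shows "(\<Sum>l\<in>{1..2^(m - Suc k)}. norm_d d (haar_coef m u (Suc k, l)) * sqrt (2^Suc k))
    \<le> sqrt (switches (2^m) u) * sqrt (Ebar d (2^m) u)"
proof -
  define Z where "Z = {l \<in> {1..2^(m - Suc k)}. haar_coef m u (Suc k, l) \<noteq> (\<lambda>i. 0)}"
  define e where "e l = sqrt (\<Sum>\<tau>\<in>dyadic_block (Suc k) (l-1). (norm_d d (\<lambda>i. u \<tau> i - ubar (2^m) u i))^2)"
    for l
  have "(\<Sum>l\<in>{1..2^(m - Suc k)}. norm_d d (haar_coef m u (Suc k, l)) * sqrt (2^Suc k))
      = (\<Sum>l\<in>Z. norm_d d (haar_coef m u (Suc k, l)) * sqrt (2^Suc k))"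
    unfolding Z_def by (rule sum.mono_neutral_right) auto
  also have "\<dots> \<le> (\<Sum>l\<in>Z. e l)"
  proof (rule sum_mono)
    fix l
    assume "l \<in> Z"
    then obtain b where "l = Suc b" unfolding Z_def by (cases l) auto
    then show "norm_d d (haar_coef m u (Suc k, l)) * sqrt (2^Suc k) \<le> e l"
      unfolding e_def using norm_haar_coef_sqrt_le by simp
  qed
  also have "\<dots> \<le> sqrt (card Z) * sqrt (\<Sum>l\<in>Z. (e l)^2)" by (rule sum_le_sqrt_card_mult_L2)
  also have "\<dots> \<le> sqrt (switches (2^m) u) * sqrt (Ebar d (2^m) u)"
  proof (rule mult_mono)
    show "sqrt (card Z) \<le> sqrt (switches (2^m) u)"
      using card_nonzero_haar_coef_le_switches[OF k] unfolding Z_def by simp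
    have "(\<Sum>l\<in>Z. (e l)^2) \<le> (\<Sum>l\<in>{1..2^(m - Suc k)}. (e l)^2)"
      by (rule sum_mono2) (auto simp: Z_def)
    also have "\<dots> = (\<Sum>l\<in>{1..2^(m - Suc k)}. \<Sum>\<tau>\<in>dyadic_block (Suc k) (l-1).
        (norm_d d (\<lambda>i. u \<tau> i - ubar (2^m) u i))^2)"
      unfolding e_def by (simp add: sum_nonneg)
    also have "\<dots> = (\<Sum>\<tau>\<in>{1..2^Suc k * 2^(m - Suc k)}. (norm_d d (\<lambda>i. u \<tau> i - ubar (2^m) u i))^2)"
      by (rule sum_dyadic_blocks)
    also have "\<dots> = Ebar d (2^m) u"
    proof -
      have "(2::nat)^Suc k * 2^(m - Suc k) = 2^m" using k by (metis le_add_diff_inverse power_add)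
      then show ?thesis unfolding Ebar_def by simp
    qed
    finally show "sqrt (\<Sum>l\<in>Z. (e l)^2) \<le> sqrt (Ebar d (2^m) u)" by simp
  qed (simp_all add: sum_nonneg)
  finally show ?thesis .
qed

section \<open>The regret bound\<close>

(* Copy n is active in 2^haar_level m n rounds. *)
definition haar_level :: "nat \<Rightarrow> nat \<times> nat \<Rightarrow> nat" where
  "haar_level m n = (if fst n = 0 then m else fst n)"

lemma length_received_le:
  assumes n: "n \<in> haar_idx m" and gs: "length gs = 2^m"
  shows "length (received n gs) \<le> 2^haar_level m n"
  using n
proof (cases rule: haar_idx_cases)
  case root
  have "card {t \<in> {1..2^m}. haar n t \<noteq> 0} \<le> card {1..(2::nat)^m}" by (intro card_mono) auto
  then show ?thesis using root gs by (simp add: length_received haar_level_def)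
next
  case (detail k b)
  have "{t \<in> {1..2^m}. haar n t \<noteq> 0} \<subseteq> dyadic_block (Suc k) b"
  proof
    fix t
    assume "t \<in> {t \<in> {1..2^m}. haar n t \<noteq> 0}"
    then show "t \<in> dyadic_block (Suc k) b"
      using haar_Suc_Suc_eq_0[of t k b] unfolding detail(1) by (auto simp del: haar.simps)
  qed
  then have "card {t \<in> {1..2^m}. haar n t \<noteq> 0} \<le> card (dyadic_block (Suc k) b)"
    by (intro card_mono) simp_all
  then show ?thesis using detail(1) gs by (simp add: length_received haar_level_def)
qed

lemma haar_level_le: "n \<in> haar_idx m \<Longrightarrow> haar_level m n \<le> m"
  unfolding haar_idx_def haar_level_def by auto

lemma haar_regret_le_sum_fg_regret:
  fixes u :: "nat \<Rightarrow> vec"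
  assumes G: "0 < G" and env: "valid_env d G A S" and u: "\<forall>t\<in>{1..2^m}. u t \<in> Vd d"
  shows "haar_regret m d G eps A S u
    \<le> (\<Sum>n\<in>haar_idx m.
          fg_regret d (eps/2^m) G (received n (map snd (haar_run m d G eps S (2^m)))) (haar_coef m u n))"
proof -
  define xs where "xs = map fst (haar_run m d G eps S (2^m))"
  define gs where "gs = map snd (haar_run m d G eps S (2^m))"
  have "haar_regret m d G eps A S u \<le> (\<Sum>t=1..2^m. inner_d d (gs!(t-1)) (\<lambda>i. (xs!(t-1)) i - u t i))"
    using haar_regret_le_linearized[OF G env u xs_def gs_def] .
  also have "\<dots> = (\<Sum>n\<in>haar_idx m. fg_regret d (eps/2^m) G (received n gs) (haar_coef m u n))"
  proof (rule haar_linearized_regret_eq)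
    show "\<forall>t<2^m. xs!t = haar_pred m d G eps (take t gs)"
      unfolding xs_def gs_def using haar_run_pred by blast
    show "\<forall>t\<in>{1..2^m}. u t = (\<lambda>i. \<Sum>n\<in>haar_idx m. haar n t * haar_coef m u n i)"
      by (intro ballI haar_expansion) auto
  qed (simp add: gs_def)
  finally show ?thesis unfolding gs_def .
qed

lemma ln_one_plus_mult_le:
  fixes U T :: real
  assumes U: "0 \<le> U" and T: "1 \<le> T"
  shows "1 + ln (1 + U*(1+T)*T) \<le> 3 * (1 + ln T + ln (1+U))"
proof -
  have "1 + U*(1+T)*T \<le> (1+U) * (2*T*T)"
  proof -
    have "1 * 1 \<le> T * T" using T by (intro mult_mono) auto
    moreover have "(1+T)*T \<le> (2*T)*T" using T by (intro mult_right_mono) auto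
    then have "U*((1+T)*T) \<le> U*(2*T*T)" using U by (intro mult_left_mono) auto
    ultimately show ?thesis by (simp add: algebra_simps)
  qed
  then have "ln (1 + U*(1+T)*T) \<le> ln ((1+U) * (2*T*T))"
    using U T by (subst ln_le_cancel_iff) (auto intro: add_pos_nonneg)
  also have "\<dots> = ln (1+U) + ln 2 + 2 * ln T" using U T by (simp add: ln_mult)
  also have "\<dots> \<le> ln (1+U) + 1 + 2 * ln T" using ln_le_minus_one[of 2] by simp
  finally have "ln (1 + U*(1+T)*T) \<le> ln (1+U) + 1 + 2 * ln T" .
  moreover have "0 \<le> ln T" "0 \<le> ln (1+U)" using U T by simp_all
  ultimately show ?thesis by argo
qed

lemma real_le_two_ln_power_two: "real m \<le> 2 * ln ((2::real)^m)"
proof -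
  have "1/2 \<le> ln (2::real)" using one_minus_inverse_le_ln[of 2] by simp
  then have "real m * (1/2) \<le> real m * ln 2" by (intro mult_left_mono) auto
  then show ?thesis by (simp add: ln_realpow)
qed

lemma card_haar_idx_le: "real (card (haar_idx m)) / 2^m \<le> 1 + m"
proof -
  have "card (SIGMA j:{1..m}. {1..(2::nat)^(m-j)}) = (\<Sum>j\<in>{1..m}. card {1..(2::nat)^(m-j)})"
    by (simp add: card_SigmaI)
  also have "\<dots> \<le> (\<Sum>j\<in>{1..m}. 2^m)" by (intro sum_mono) (simp add: power_increasing)
  finally have "card (haar_idx m) \<le> 1 + m * 2^m"
    unfolding haar_idx_eq using card_insert_le_m1 by (simp add: card_insert_if)
  also have "\<dots> \<le> (1 + m) * 2^m" by simp
  finally have "real (card (haar_idx m)) \<le> real ((1 + m) * 2^m)" by (rule of_nat_mono)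
  then show ?thesis by (simp add: pos_divide_le_eq algebra_simps)
qed

lemma sqrt_one_plus_le: "1 \<le> x \<Longrightarrow> sqrt (1 + x) \<le> 2 * sqrt x"
  using real_sqrt_le_mono[of "1 + x" "4 * x"] by (simp add: real_sqrt_mult)

lemma fg_regret_haar_copy_le:
  fixes u :: "nat \<Rightarrow> vec"
  assumes G: "0 < G" and n: "n \<in> haar_idx m"
    and gs: "length gs = 2^m" "\<forall>g\<in>set gs. norm_d d g \<le> G"
  defines "\<Lambda> \<equiv> 1 + ln ((2::real)^m) + ln (1 + umax d (2^m) u)"
  shows "fg_regret d (1/2^m) G (received n gs) (haar_coef m u n)
    \<le> G/2^m + 48 * \<Lambda> * G * (norm_d d (haar_coef m u n) * sqrt (1 + 2^haar_level m n))"
proof -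
  define c where "c = norm_d d (haar_coef m u n)"
  define N :: real where "N = 2^haar_level m n"
  define U where "U = umax d (2^m) u"
  have c: "0 \<le> c" "c \<le> U" unfolding c_def U_def using norm_haar_coef_le_umax[OF n] by simp_all
  have N: "1 \<le> N" "N \<le> 2^m"
    unfolding N_def using haar_level_le[OF n] by (simp_all add: power_increasing)
  have "fg_regret d (1/2^m) G (received n gs) (haar_coef m u n)
      \<le> 1/2^m * G + 16 * c * G * sqrt (1 + real (2^haar_level m n))
          * (1 + ln (1 + c * (1 + real (2^haar_level m n)) / (1/2^m)))"
    unfolding c_def
    by (rule fg_regret_le[OF G _ received_norm_le[OF gs(2)] length_received_le[OF n gs(1)]]) simp
  then have "fg_regret d (1/2^m) G (received n gs) (haar_coef m u n)
      \<le> G/2^m + 16 * c * G * sqrt (1 + N) * (1 + ln (1 + c * (1 + N) / (1/2^m)))"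
    by (simp add: N_def)
  also have "\<dots> \<le> G/2^m + 16 * c * G * sqrt (1 + N) * (3 * \<Lambda>)"
  proof -
    have "c * (1 + N) * 2^m \<le> U * (1 + 2^m) * 2^m" using c N by (intro mult_right_mono mult_mono) auto
    then have "ln (1 + c * (1 + N) * 2^m) \<le> ln (1 + U * (1 + 2^m) * 2^m)"
      using c N by (subst ln_le_cancel_iff) (auto intro: add_pos_nonneg)
    also have "1 + \<dots> \<le> 3 * \<Lambda>"
      unfolding \<Lambda>_def U_def using ln_one_plus_mult_le[OF umax_nonneg, of "2^m"] by simp
    finally have "1 + ln (1 + c * (1 + N) / (1/2^m)) \<le> 3 * \<Lambda>" by simp
    then show ?thesis using c G N by (intro add_left_mono mult_left_mono) auto
  qed
  finally show ?thesis unfolding c_def N_def by (simp add: mult_ac)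
qed

lemma sum_haar_coef_weighted_le:
  "(\<Sum>n\<in>haar_idx m. norm_d d (haar_coef m u n) * sqrt (1 + 2^haar_level m n))
    \<le> 2 * (norm_d d (ubar (2^m) u) * sqrt (2^m)) + 2 * m * sqrt (switches (2^m) u * Ebar d (2^m) u)"
proof -
  have "(\<Sum>l\<in>{1..2^(m-j)}. norm_d d (haar_coef m u (j,l)) * sqrt (1 + 2^j))
      \<le> 2 * sqrt (switches (2^m) u * Ebar d (2^m) u)" if j: "j \<in> {1..m}" for j
  proof -
    obtain k where k: "j = Suc k" "Suc k \<le> m" using j by (cases j) auto
    have "(\<Sum>l\<in>{1..2^(m-j)}. norm_d d (haar_coef m u (j,l)) * sqrt (1 + 2^j))
        \<le> (\<Sum>l\<in>{1..2^(m-j)}. 2 * (norm_d d (haar_coef m u (j,l)) * sqrt (2^j)))"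
    proof (rule sum_mono)
      fix l
      show "norm_d d (haar_coef m u (j,l)) * sqrt (1 + 2^j)
          \<le> 2 * (norm_d d (haar_coef m u (j,l)) * sqrt (2^j))"
        using mult_left_mono[OF sqrt_one_plus_le[of "2^j"] norm_d_nonneg[of d "haar_coef m u (j,l)"]]
        by (simp add: algebra_simps)
    qed
    also have "\<dots> = 2 * (\<Sum>l\<in>{1..2^(m-j)}. norm_d d (haar_coef m u (j,l)) * sqrt (2^j))"
      by (simp add: sum_distrib_left)
    also have "\<dots> \<le> 2 * (sqrt (switches (2^m) u) * sqrt (Ebar d (2^m) u))"
      using haar_level_energy_le[OF k(2), of d u] unfolding k(1) by simp
    finally show ?thesis by (simp add: real_sqrt_mult)
  qed
  then have "(\<Sum>j\<in>{1..m}. \<Sum>l\<in>{1..2^(m-j)}. norm_d d (haar_coef m u (j,l)) * sqrt (1 + 2^haar_level m (j,l)))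
      \<le> m * (2 * sqrt (switches (2^m) u * Ebar d (2^m) u))"
    using sum_mono[of "{1..m}" _ "\<lambda>_. 2 * sqrt (switches (2^m) u * Ebar d (2^m) u)"]
    by (simp add: haar_level_def)
  moreover have "norm_d d (ubar (2^m) u) * sqrt (1 + 2^m) \<le> 2 * (norm_d d (ubar (2^m) u) * sqrt (2^m))"
    using mult_left_mono[OF sqrt_one_plus_le[of "2^m"] norm_d_nonneg[of d "ubar (2^m) u"]]
    by (simp add: algebra_simps)
  ultimately show ?thesis unfolding sum_haar_idx by (simp add: haar_level_def haar_coef_0)
qed

lemma haar_regret_le:
  fixes u :: "nat \<Rightarrow> vec"
  assumes G: "0 < G" and env: "valid_env d G A S" and u: "\<forall>t\<in>{1..2^m}. u t \<in> Vd d"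
  shows "haar_regret m d G 1 A S u \<le> 192 * G * (1 + ln (2^m) + ln (1 + umax d (2^m) u))^2
    * (1 + norm_d d (ubar (2^m) u) * sqrt (2^m) + sqrt (real (switches (2^m) u) * Ebar d (2^m) u))"
proof -
  define gs where "gs = map snd (haar_run m d G 1 S (2^m))"
  define \<Lambda> where "\<Lambda> = 1 + ln ((2::real)^m) + ln (1 + umax d (2^m) u)"
  define X where "X = norm_d d (ubar (2^m) u) * sqrt (2^m)"
  define Y where "Y = sqrt (real (switches (2^m) u) * Ebar d (2^m) u)"
  have XY: "0 \<le> X" "0 \<le> Y" unfolding X_def Y_def Ebar_def by (simp_all add: sum_nonneg)
  have "0 \<le> ln (1 + umax d (2^m) u)" using umax_nonneg[of "2^m" d u] by simp
  then have \<Lambda>: "1 \<le> \<Lambda>" "1 + real m \<le> 2 * \<Lambda>"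
    using real_le_two_ln_power_two[of m] unfolding \<Lambda>_def by simp_all
  have gs: "length gs = 2^m" "\<forall>g\<in>set gs. norm_d d g \<le> G"
    using haar_run_in_Vd[OF G env] unfolding gs_def by auto
  have "haar_regret m d G 1 A S u \<le> (\<Sum>n\<in>haar_idx m. fg_regret d (1/2^m) G (received n gs) (haar_coef m u n))"
    using haar_regret_le_sum_fg_regret[OF G env u] unfolding gs_def by simp
  also have "\<dots> \<le> (\<Sum>n\<in>haar_idx m.
      G/2^m + 48 * \<Lambda> * G * (norm_d d (haar_coef m u n) * sqrt (1 + 2^haar_level m n)))"
    unfolding \<Lambda>_def by (intro sum_mono fg_regret_haar_copy_le[OF G _ gs])
  also have "\<dots> = card (haar_idx m) * G/2^m
      + 48 * \<Lambda> * G * (\<Sum>n\<in>haar_idx m. norm_d d (haar_coef m u n) * sqrt (1 + 2^haar_level m n))"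
    by (simp add: sum.distrib sum_distrib_left)
  also have "\<dots> \<le> 2 * \<Lambda> * G + 48 * \<Lambda> * G * (2 * X + 2 * m * Y)"
  proof (rule add_mono)
    have "card (haar_idx m) * G/2^m = card (haar_idx m) / 2^m * G" by simp
    also have "\<dots> \<le> (1 + m) * G" using card_haar_idx_le G by (intro mult_right_mono) simp_all
    also have "\<dots> \<le> 2 * \<Lambda> * G" using \<Lambda> G by (intro mult_right_mono) simp_all
    finally show "card (haar_idx m) * G/2^m \<le> 2 * \<Lambda> * G" .
    show "48 * \<Lambda> * G * (\<Sum>n\<in>haar_idx m. norm_d d (haar_coef m u n) * sqrt (1 + 2^haar_level m n))
        \<le> 48 * \<Lambda> * G * (2 * X + 2 * m * Y)"
      using sum_haar_coef_weighted_le[of d m u] \<Lambda> G unfolding X_def Y_def by (intro mult_left_mono) simp_all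
  qed
  also have "\<dots> \<le> 192 * G * \<Lambda>^2 * (1 + X + Y)"
  proof -
    have "1 * X \<le> \<Lambda> * X" "real m * Y \<le> 2 * \<Lambda> * Y" using \<Lambda> XY by (intro mult_right_mono; simp)+
    moreover have "0 \<le> \<Lambda> * X" using \<Lambda> XY by simp
    ultimately have "2 + 96 * X + 96 * m * Y \<le> 192 * \<Lambda> * (1 + X + Y)" using \<Lambda> by (simp add: algebra_simps)
    then have "\<Lambda> * G * (2 + 96 * X + 96 * m * Y) \<le> \<Lambda> * G * (192 * \<Lambda> * (1 + X + Y))"
      using \<Lambda> G by (intro mult_left_mono) simp_all
    then show ?thesis by (simp add: algebra_simps power2_eq_square)
  qed
  finally show ?thesis unfolding \<Lambda>_def X_def Y_def by simp
qed

theorem lemma5: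
  fixes G :: real
  assumes "G > 0"
  shows "\<exists>C::real. \<exists>k::nat. C > 0 \<and>
    (\<forall>m d u A S. 1 \<le> m \<and> 1 \<le> d \<and> (\<forall>t\<in>{1..2^m}. u t \<in> Vd d) \<and> valid_env d G A S \<longrightarrow>
       haar_regret m d G 1 A S u
         \<le> C * (1 + ln (2^m) + ln (1 + umax d (2^m) u)) ^ k
             * (1 + norm_d d (ubar (2^m) u) * sqrt (2^m)
                  + sqrt (real (switches (2^m) u) * Ebar d (2^m) u)))"
  using assms haar_regret_le by (intro exI[of _ "192 * G"] exI[of _ 2]) auto

end
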